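(* Let $A,B\in\mathbb{B}(\mathscr{H})$, let $x\in\mathscr{H}$ be a unit vector, and let $f:[0,\infty)\to\mathbb{R}$ be an increasing convex function. Then for every $0<\alpha<1$, \[ f\left(|\langle Ax,x\rangle\langle Bx,x\rangle|^2\right)\le \frac{f\left(|\langle BAx,x\rangle|^2\right)+\left\langle\left(\alpha f\left(|A|^{2/\alpha}\right)+(1-\alpha)f\left(|B^*|^{2/(1-\alpha)}\right)\right)x,x\right\rangle}{2}. \] Further, \[ f\left(|\langle Ax,x\rangle\langle Bx,x\rangle|\right)\le \frac12 f\left(|\langle BAx,x\rangle|\right)+\frac14\left\langle\left(f(|A|^2)+f(|B^*|^2)\right)x,x\right\rangle. \]
   Context: $\mathscr{H}$ is a complex Hilbert space with inner product $\langle\cdot,\cdot\rangle$, $\mathbb{B}(\mathscr{H})$ is the algebra of bounded linear operators on it, $T^*$ denotes the adjoint, and $|T|=(T^*T)^{1/2}$. For a positive operator $P$ and a function $f$ on $[0,\infty)$, $f(P)$ is defined by continuous functional calculus. *)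

theory Defs
  imports "HOL-Analysis.Analysis" "HOL-Computational_Algebra.Polynomial"
begin

text \<open>The distribution has no complex vector spaces,
so we introduce them as a type class: a (real) Banach space carrying a complex
scalar multiplication compatible with the real one, and a complex inner product
(linear in the first argument, conjugate-symmetric, positive) inducing the norm.\<close>

class chilbert = banach +
  fixes scaleC :: "complex \<Rightarrow> 'a \<Rightarrow> 'a"
    and cinner :: "'a \<Rightarrow> 'a \<Rightarrow> complex"
  assumes scaleC_add_right: "scaleC a (x + y) = scaleC a x + scaleC a y"
    and scaleC_add_left: "scaleC (a + b) x = scaleC a x + scaleC b x"
    and scaleC_scaleC: "scaleC a (scaleC b x) = scaleC (a * b) x"
    and scaleC_one: "scaleC 1 x = x"
    and scaleR_scaleC: "scaleR r x = scaleC (complex_of_real r) x"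
    and cinner_add_left: "cinner (x + y) z = cinner x z + cinner y z"
    and cinner_scaleC_left: "cinner (scaleC a x) y = a * cinner x y"
    and cinner_commute: "cinner x y = cnj (cinner y x)"
    and cinner_self_real: "Im (cinner x x) = 0"
    and cinner_self_nonneg: "0 \<le> Re (cinner x x)"
    and norm_cinner: "norm x = sqrt (Re (cinner x x))"

definition bounded_op :: "('a::chilbert \<Rightarrow> 'a) \<Rightarrow> bool" where
  "bounded_op A \<longleftrightarrow> bounded_linear A \<and> (\<forall>c x. A (scaleC c x) = scaleC c (A x))"

definition adj :: "('a::chilbert \<Rightarrow> 'a) \<Rightarrow> ('a \<Rightarrow> 'a)" where
  "adj A = (THE B. \<forall>x y. cinner (A x) y = cinner x (B y))"

definition poly_op :: "real poly \<Rightarrow> ('a::real_normed_vector \<Rightarrow> 'a) \<Rightarrow> ('a \<Rightarrow> 'a)" where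
  "poly_op p P = (\<lambda>x. \<Sum>k\<le>degree p. coeff p k *\<^sub>R (P ^^ k) x)"

text \<open>Continuous functional calculus f(P) for a positive operator P (spectrum in
[0, norm P]): the operator-norm limit of p_n(P) for any sequence of polynomials
p_n converging uniformly to f on [0, norm P].\<close>
definition fcalc :: "(real \<Rightarrow> real) \<Rightarrow> ('a::real_normed_vector \<Rightarrow> 'a) \<Rightarrow> ('a \<Rightarrow> 'a)" where
  "fcalc f P = (THE T. bounded_linear T \<and>
     (\<forall>p :: nat \<Rightarrow> real poly.
        uniform_limit {0..onorm P} (\<lambda>n t. poly (p n) t) f sequentially \<longrightarrow>
        (\<lambda>n. onorm (\<lambda>x. poly_op (p n) P x - T x)) \<longlonglongrightarrow> 0))"

definition abs_op :: "('a::chilbert \<Rightarrow> 'a) \<Rightarrow> ('a \<Rightarrow> 'a)" where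
  "abs_op T = fcalc sqrt (adj T \<circ> T)"

end

theory Submission
  imports Defs "HOL-Computational_Algebra.Fundamental_Theorem_Algebra"
begin

text \<open>Buzano's inequality gives \<open>2 \<bar>\<langle>Ax,x\<rangle>\<langle>Bx,x\<rangle>\<bar> \<le> \<parallel>Ax\<parallel> \<parallel>B\<^sup>*x\<parallel> + \<bar>\<langle>BAx,x\<rangle>\<bar>\<close> for a unit vector \<open>x\<close>,
and \<open>\<parallel>Ax\<parallel>\<^sup>2 = \<langle>|A|\<^sup>2x,x\<rangle>\<close>, \<open>\<parallel>B\<^sup>*x\<parallel>\<^sup>2 = \<langle>|B\<^sup>*|\<^sup>2x,x\<rangle>\<close>. Both bounds then follow from the
convexity and monotonicity of \<open>f\<close>, Young's inequality, and the operator Jensen inequality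
\<open>\<phi>(\<langle>g(P)x,x\<rangle>) \<le> \<langle>(\<phi> \<circ> g)(P)x,x\<rangle>\<close> for increasing convex \<open>\<phi>\<close>, which contains McCarthy's
inequality \<open>\<langle>S\<^sup>2x,x\<rangle> \<le> \<langle>S\<^bsup>2/\<alpha>\<^esup>x,x\<rangle>\<^sup>\<alpha>\<close> as the case \<open>\<phi> t = t\<^bsup>1/\<alpha>\<^esup>\<close>, \<open>g t = t\<^sup>2\<close>.

In an abstract Hilbert space, adjoints come from the Riesz representation theorem, and
\<open>f(P)\<close> is the operator-norm limit of \<open>p\<^sub>n(P)\<close> for Weierstrass approximants \<open>p\<^sub>n\<close> of \<open>f\<close>.
Both this limit and Jensen's inequality rest on positivity of \<open>p(P)\<close> whenever \<open>p \<ge> 0\<close> on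
\<open>[0, \<parallel>P\<parallel>]\<close>, which follows from a certificate \<open>p = \<sigma>\<^sub>0 + X \<sigma>\<^sub>1 + (\<parallel>P\<parallel> - X) \<sigma>\<^sub>2\<close> with
sums of squares \<open>\<sigma>\<^sub>i\<close>.\<close>

section \<open>Complex inner products\<close>

lemma cinner_zero_left [simp]: "cinner 0 y = 0"
proof -
  have "cinner (0 + 0) y = cinner 0 y + cinner 0 y" by (rule cinner_add_left)
  then show ?thesis by simp
qed

lemma cinner_minus_left [simp]: "cinner (- x) y = - cinner x y"
proof -
  have "cinner (x + - x) y = cinner x y + cinner (- x) y" by (rule cinner_add_left)
  then show ?thesis by (simp add: add_eq_0_iff)
qed

lemma cinner_diff_left: "cinner (x - y) z = cinner x z - cinner y z"
  using cinner_add_left[of x "- y" z] by simp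

lemma cinner_add_right: "cinner x (y + z) = cinner x y + cinner x z"
  by (metis cinner_add_left cinner_commute complex_cnj_add)

lemma cinner_zero_right [simp]: "cinner x 0 = 0"
  by (metis cinner_commute cinner_zero_left complex_cnj_zero)

lemma cinner_diff_right: "cinner x (y - z) = cinner x y - cinner x z"
  by (metis cinner_commute cinner_diff_left complex_cnj_diff)

lemma cinner_scaleC_right: "cinner x (scaleC a y) = cnj a * cinner x y"
  by (metis cinner_commute cinner_scaleC_left complex_cnj_mult)

lemma cinner_scaleR_left: "cinner (r *\<^sub>R x) y = of_real r * cinner x y"
  by (simp add: scaleR_scaleC cinner_scaleC_left)

lemma cinner_scaleR_right: "cinner x (r *\<^sub>R y) = of_real r * cinner x y"
  by (simp add: scaleR_scaleC cinner_scaleC_right)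

lemma power2_norm_eq_cinner: "(norm x)\<^sup>2 = Re (cinner x x)"
  using norm_cinner[of x] cinner_self_nonneg[of x] by simp

lemma cinner_self: "cinner x x = complex_of_real ((norm x)\<^sup>2)"
  using power2_norm_eq_cinner[of x] cinner_self_real[of x] by (simp add: complex_eq_iff)

lemma cinner_eqI: "(\<And>y. cinner x y = cinner z y) \<Longrightarrow> x = z"
proof -
  assume "\<And>y. cinner x y = cinner z y"
  then have "cinner (x - z) (x - z) = 0" by (simp add: cinner_diff_left)
  then show "x = z" by (simp add: cinner_self)
qed

lemma cinner_eqI_right: "(\<And>y. cinner y x = cinner y z) \<Longrightarrow> x = z"
  by (rule cinner_eqI) (metis cinner_commute)

lemma of_real_cmod_power2: "complex_of_real ((cmod k)\<^sup>2) = k * cnj k"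
  using complex_norm_square[of k] by simp

lemma power2_norm_diff_projection:
  assumes "y \<noteq> 0"
  shows "(norm (x - scaleC (cinner x y / of_real ((norm y)\<^sup>2)) y))\<^sup>2
          = (norm x)\<^sup>2 - (cmod (cinner x y))\<^sup>2 / (norm y)\<^sup>2"
proof -
  define k where "k = cinner x y"
  define n where "n = (norm y)\<^sup>2"
  have n0: "n > 0" unfolding n_def using assms by simp
  define c where "c = k / of_real n"
  have yy: "cinner y y = of_real n" unfolding n_def by (rule cinner_self)
  have yx: "cinner y x = cnj k" unfolding k_def by (rule cinner_commute)
  have "cinner (x - scaleC c y) (x - scaleC c y)
      = cinner x x - cnj c * k - c * cnj k + c * cnj c * of_real n"
    by (simp add: cinner_diff_left cinner_diff_right cinner_scaleC_left cinner_scaleC_right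
        yy yx k_def algebra_simps)
  also have "\<dots> = cinner x x - k * cnj k / of_real n"
    using n0 unfolding c_def by (simp add: field_simps)
  also have "\<dots> = cinner x x - of_real ((cmod k)\<^sup>2 / n)"
    by (simp only: of_real_cmod_power2[symmetric] of_real_divide)
  finally show ?thesis unfolding c_def k_def n_def by (simp add: power2_norm_eq_cinner)
qed

lemma cmod_cinner_le: "cmod (cinner x y) \<le> norm x * norm y"
proof (cases "y = 0")
  case False
  have "0 \<le> (norm x)\<^sup>2 - (cmod (cinner x y))\<^sup>2 / (norm y)\<^sup>2"
    using power2_norm_diff_projection[OF False, of x] by (metis zero_le_power2)
  then have "(cmod (cinner x y))\<^sup>2 \<le> (norm x * norm y)\<^sup>2"
    using False by (simp add: field_simps power_mult_distrib)
  then show ?thesis by (simp add: power2_le_iff_abs_le)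
qed simp

lemma bounded_bilinear_cinner: "bounded_bilinear (cinner :: 'a::chilbert \<Rightarrow> 'a \<Rightarrow> complex)"
proof
  fix a a' b b' :: 'a and r :: real
  show "cinner (a + a') b = cinner a b + cinner a' b" by (rule cinner_add_left)
  show "cinner a (b + b') = cinner a b + cinner a b'" by (rule cinner_add_right)
  show "cinner (r *\<^sub>R a) b = r *\<^sub>R cinner a b" by (simp add: cinner_scaleR_left scaleR_conv_of_real)
  show "cinner a (r *\<^sub>R b) = r *\<^sub>R cinner a b" by (simp add: cinner_scaleR_right scaleR_conv_of_real)
  show "\<exists>K. \<forall>a b. norm (cinner a b) \<le> norm (a::'a) * norm b * K"
    by (rule exI[of _ 1]) (simp add: cmod_cinner_le)
qed

lemma tendsto_cinner_left: "(f \<longlonglongrightarrow> a) \<Longrightarrow> (\<lambda>n. cinner (f n) y) \<longlonglongrightarrow> cinner a y"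
  by (rule bounded_bilinear.tendsto[OF bounded_bilinear_cinner]) auto

lemma parallelogram_law:
  "(norm (a + b :: 'a::chilbert))\<^sup>2 + (norm (a - b))\<^sup>2 = 2 * (norm a)\<^sup>2 + 2 * (norm b)\<^sup>2"
  unfolding power2_norm_eq_cinner
  by (simp add: cinner_add_left cinner_add_right cinner_diff_left cinner_diff_right)

section \<open>Riesz representation and adjoints\<close>

lemma midpoint_convex_minimizing_Cauchy:
  fixes N :: "'a::chilbert set"
  assumes mid: "\<And>a b. a \<in> N \<Longrightarrow> b \<in> N \<Longrightarrow> (1/2) *\<^sub>R (a + b) \<in> N"
    and lower: "\<And>n. n \<in> N \<Longrightarrow> d \<le> (norm (u - n))\<^sup>2"
    and sN: "\<And>k. s k \<in> N" and sd: "\<And>k. (norm (u - s k))\<^sup>2 < d + 1 / (real k + 1)"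
  shows "Cauchy s"
proof (rule metric_CauchyI)
  have est: "(norm (s k - s m))\<^sup>2 \<le> 2 / (real k + 1) + 2 / (real m + 1)" for k m
  proof -
    have "u - s k + (u - s m) = 2 *\<^sub>R (u - (1/2) *\<^sub>R (s k + s m))"
      by (simp add: algebra_simps scaleR_2)
    then have "(norm (u - s k + (u - s m)))\<^sup>2 = 4 * (norm (u - (1/2) *\<^sub>R (s k + s m)))\<^sup>2"
      by (simp add: power_mult_distrib)
    then have sum: "4 * d \<le> (norm (u - s k + (u - s m)))\<^sup>2"
      using lower[OF mid[OF sN sN]] by simp
    have "(norm (s k - s m))\<^sup>2 = (norm ((u - s k) - (u - s m)))\<^sup>2"
      by (simp add: norm_minus_commute)
    also have "\<dots> = 2 * (norm (u - s k))\<^sup>2 + 2 * (norm (u - s m))\<^sup>2 - (norm (u - s k + (u - s m)))\<^sup>2"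
      using parallelogram_law[of "u - s k" "u - s m"] by simp
    finally show ?thesis using sd[of k] sd[of m] sum by simp
  qed
  fix e :: real assume e: "e > 0"
  obtain K :: nat where K: "4 / e\<^sup>2 < real K" using reals_Archimedean2 by blast
  have "dist (s k) (s m) < e" if "k \<ge> K" "m \<ge> K" for k m
  proof -
    have "2 / (real k + 1) \<le> 2 / (real K + 1)" "2 / (real m + 1) \<le> 2 / (real K + 1)"
      using that by (auto intro!: divide_left_mono)
    then have "2 / (real k + 1) + 2 / (real m + 1) \<le> 4 / (real K + 1)" by simp
    also have "4 / (real K + 1) < e\<^sup>2"
      using K e by (simp add: field_simps add_pos_nonneg add.commute add_strict_increasing2)
    finally have "(norm (s k - s m))\<^sup>2 < e\<^sup>2" using est[of k m] by linarith
    then show ?thesis using e by (simp add: dist_norm power_less_imp_less_base)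
  qed
  then show "\<exists>M. \<forall>m\<ge>M. \<forall>n\<ge>M. dist (s m) (s n) < e" by blast
qed

lemma exists_nearest_point:
  fixes N :: "'a::chilbert set"
  assumes "closed N" "n \<in> N" and mid: "\<And>a b. a \<in> N \<Longrightarrow> b \<in> N \<Longrightarrow> (1/2) *\<^sub>R (a + b) \<in> N"
  obtains n0 where "n0 \<in> N" "\<And>n. n \<in> N \<Longrightarrow> norm (u - n0) \<le> norm (u - n)"
proof -
  define D where "D = (\<lambda>n. (norm (u - n))\<^sup>2) ` N"
  define d where "d = Inf D"
  have Dbdd: "bdd_below D" unfolding D_def by (intro bdd_belowI[of _ 0]) auto
  have lower: "d \<le> (norm (u - n))\<^sup>2" if "n \<in> N" for n
    unfolding d_def using that Dbdd by (intro cInf_lower) (auto simp: D_def)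
  have "\<exists>n\<in>N. (norm (u - n))\<^sup>2 < d + 1 / (real k + 1)" for k
  proof -
    have "D \<noteq> {}" unfolding D_def using \<open>n \<in> N\<close> by blast
    from cInf_lessD[OF this, of "d + 1 / (real k + 1)"] show ?thesis
      unfolding d_def D_def by auto
  qed
  then obtain s where sN: "\<And>k. s k \<in> N" and sd: "\<And>k. (norm (u - s k))\<^sup>2 < d + 1 / (real k + 1)"
    by metis
  obtain n0 where lim: "s \<longlonglongrightarrow> n0"
    using midpoint_convex_minimizing_Cauchy[OF mid lower sN sd] Cauchy_convergent_iff convergent_def
    by blast
  have "n0 \<in> N" using \<open>closed N\<close> sN lim closed_sequentially by blast
  moreover have "(norm (u - n0))\<^sup>2 \<le> d"
  proof (rule tendsto_upperbound)
    have "(\<lambda>k. 1 / (real k + 1)) \<longlonglongrightarrow> 0"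
      using LIMSEQ_inverse_real_of_nat by (simp add: inverse_eq_divide add.commute)
    then show "(\<lambda>k. (norm (u - s k))\<^sup>2 - 1 / (real k + 1)) \<longlonglongrightarrow> (norm (u - n0))\<^sup>2"
      using tendsto_diff[OF tendsto_power[OF tendsto_norm[OF tendsto_diff[OF tendsto_const lim]]]]
      by fastforce
    show "\<forall>\<^sub>F k in sequentially. (norm (u - s k))\<^sup>2 - 1 / (real k + 1) \<le> d"
      using sd by (intro always_eventually) (simp add: less_imp_le algebra_simps)
  qed simp
  ultimately show ?thesis
    using that lower by (meson norm_ge_zero order_trans power2_le_imp_le)
qed

lemma nearest_point_orthogonal:
  fixes N :: "'a::chilbert set"
  assumes n0: "n0 \<in> N" and nearest: "\<And>n. n \<in> N \<Longrightarrow> norm (u - n0) \<le> norm (u - n)"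
    and add: "\<And>a b. a \<in> N \<Longrightarrow> b \<in> N \<Longrightarrow> a + b \<in> N"
    and scale: "\<And>c a. a \<in> N \<Longrightarrow> scaleC c a \<in> N"
    and v: "v \<in> N"
  shows "cinner (u - n0) v = 0"
proof (cases "v = 0")
  case False
  define c where "c = cinner (u - n0) v / of_real ((norm v)\<^sup>2)"
  have "norm (u - n0) \<le> norm (u - (n0 + scaleC c v))"
    using nearest add[OF n0 scale[OF v]] by blast
  also have "u - (n0 + scaleC c v) = (u - n0) - scaleC c v" by simp
  finally have "(norm (u - n0))\<^sup>2 \<le> (norm ((u - n0) - scaleC c v))\<^sup>2"
    by (simp add: power_mono)
  also have "\<dots> = (norm (u - n0))\<^sup>2 - (cmod (cinner (u - n0) v))\<^sup>2 / (norm v)\<^sup>2"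
    unfolding c_def by (rule power2_norm_diff_projection[OF False])
  finally have "(cmod (cinner (u - n0) v))\<^sup>2 \<le> 0"
    using False by (simp add: divide_le_0_iff)
  then show ?thesis by simp
qed simp

lemma riesz_representation:
  fixes \<phi> :: "'a::chilbert \<Rightarrow> complex"
  assumes bl: "bounded_linear \<phi>" and hom: "\<And>c x. \<phi> (scaleC c x) = c * \<phi> x"
  shows "\<exists>z. \<forall>x. \<phi> x = cinner x z"
proof (cases "\<forall>x. \<phi> x = 0")
  case False
  then obtain u where u: "\<phi> u \<noteq> 0" by blast
  interpret \<phi>: bounded_linear \<phi> by (rule bl)
  define N where "N = {n. \<phi> n = 0}"
  have add: "a + b \<in> N" if "a \<in> N" "b \<in> N" for a b using that by (simp add: N_def \<phi>.add)
  have scale: "scaleC c a \<in> N" if "a \<in> N" for a c using that by (simp add: N_def hom)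
  have mid: "(1/2) *\<^sub>R (a + b) \<in> N" if "a \<in> N" "b \<in> N" for a b
    using add[OF that] by (simp add: N_def \<phi>.scaleR)
  have "closed N"
    unfolding N_def by (intro closed_Collect_eq linear_continuous_on bl continuous_on_const)
  moreover have "0 \<in> N" unfolding N_def by simp
  ultimately obtain n0 where n0: "n0 \<in> N" and nearest: "\<And>n. n \<in> N \<Longrightarrow> norm (u - n0) \<le> norm (u - n)"
    using exists_nearest_point mid by blast
  define w where "w = u - n0"
  have w0: "\<phi> w \<noteq> 0" using u n0 by (simp add: w_def N_def \<phi>.diff)
  then have "w \<noteq> 0" by auto
  show ?thesis
  proof (intro exI allI)
    fix x
    have "scaleC (\<phi> x) w - scaleC (\<phi> w) x \<in> N" by (simp add: N_def \<phi>.diff hom)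
    then have "cinner w (scaleC (\<phi> x) w - scaleC (\<phi> w) x) = 0"
      using nearest_point_orthogonal[OF n0 nearest add scale] unfolding w_def by blast
    then have "cinner (scaleC (\<phi> x) w - scaleC (\<phi> w) x) w = 0"
      by (metis cinner_commute complex_cnj_zero)
    then have "\<phi> x * cinner w w = \<phi> w * cinner x w"
      by (simp add: cinner_diff_left cinner_scaleC_left)
    then show "\<phi> x = cinner x (scaleC (cnj (\<phi> w) / of_real ((norm w)\<^sup>2)) w)"
      using \<open>w \<noteq> 0\<close> by (simp add: cinner_self cinner_scaleC_right field_simps)
  qed
qed (intro exI[of _ 0]; simp)

lemma adj_unique:
  assumes "\<forall>x y. cinner (A x) y = cinner x (B y)"
  shows "adj A = B"
  unfolding adj_def
proof (rule the_equality)
  fix B' assume "\<forall>x y. cinner (A x) y = cinner x (B' y)"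
  then show "B' = B" using assms by (metis cinner_eqI_right ext)
qed (rule assms)

lemma cinner_adj_right:
  assumes "bounded_op A"
  shows "cinner (A x) y = cinner x (adj A y)"
proof -
  have bl: "bounded_linear A" and hom: "\<And>c x. A (scaleC c x) = scaleC c (A x)"
    using assms unfolding bounded_op_def by auto
  have "\<exists>z. \<forall>x. cinner (A x) y = cinner x z" for y
  proof (rule riesz_representation)
    show "bounded_linear (\<lambda>x. cinner (A x) y)"
      by (rule bounded_linear_compose[OF bounded_bilinear.bounded_linear_left[OF bounded_bilinear_cinner] bl])
  qed (simp add: hom cinner_scaleC_left)
  then obtain B where "\<forall>x y. cinner (A x) y = cinner x (B y)" by metis
  moreover from this have "adj A = B" by (rule adj_unique)
  ultimately show ?thesis by simp
qed

lemma cinner_adj_left: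
  assumes "bounded_op A"
  shows "cinner (adj A y) x = cinner y (A x)"
  by (metis cinner_adj_right[OF assms] cinner_commute)

lemma bounded_op_adj:
  assumes A: "bounded_op A"
  shows "bounded_op (adj A)"
proof -
  obtain K where K: "\<And>x. norm (A x) \<le> norm x * K" "K > 0"
    using A bounded_linear.pos_bounded unfolding bounded_op_def by blast
  have bd: "norm (adj A y) \<le> norm y * K" for y
  proof -
    have "(norm (adj A y))\<^sup>2 = Re (cinner y (A (adj A y)))"
      by (simp add: power2_norm_eq_cinner cinner_adj_left[OF A])
    also have "\<dots> \<le> norm y * norm (A (adj A y))"
      using complex_Re_le_cmod cmod_cinner_le order_trans by blast
    also have "\<dots> \<le> norm y * (norm (adj A y) * K)" using K by (simp add: mult_left_mono)
    finally show ?thesis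
      using K(2) by (cases "adj A y = 0") (auto simp: power2_eq_square algebra_simps)
  qed
  have "bounded_linear (adj A)"
    by (rule bounded_linear_intro[OF _ _ bd];
        rule cinner_eqI; simp add: cinner_adj_left[OF A] cinner_add_left cinner_scaleR_left)
  moreover have "adj A (scaleC c y) = scaleC c (adj A y)" for c y
    by (rule cinner_eqI) (simp add: cinner_adj_left[OF A] cinner_scaleC_left)
  ultimately show ?thesis unfolding bounded_op_def by blast
qed

section \<open>Polynomials nonnegative on an interval\<close>

inductive sos :: "real poly \<Rightarrow> bool" where
  sos_0 [simp]: "sos 0"
| sos_add_square: "sos s \<Longrightarrow> sos (r * r + s)"

lemma sos_add: "sos a \<Longrightarrow> sos b \<Longrightarrow> sos (a + b)"
  by (induction a rule: sos.induct) (auto simp: add.assoc intro: sos.intros)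

lemma sos_square_mult: "sos b \<Longrightarrow> sos (r * r * b)"
proof (induction b rule: sos.induct)
  case (sos_add_square s q)
  have "r * r * (q * q + s) = (r * q) * (r * q) + r * r * s" by (simp add: algebra_simps)
  then show ?case using sos_add_square by (simp add: sos.intros)
qed simp

lemma sos_mult: "sos a \<Longrightarrow> sos b \<Longrightarrow> sos (a * b)"
  by (induction a rule: sos.induct) (auto simp: distrib_right intro: sos_add sos_square_mult)

lemma sos_square: "sos (r * r)"
  using sos_add_square[OF sos_0, of r] by simp

lemma sos_const: "c \<ge> 0 \<Longrightarrow> sos [:c:]"
  using sos_square[of "[:sqrt c:]"] by simp

text \<open>Since \<open>(q r\<^sup>2)(P) = r(P) q(P) r(P)\<close>, substituting a positive \<open>P\<close> with \<open>\<parallel>P\<parallel> \<le> M\<close> for \<open>X\<close>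
in such a certificate gives a positive operator: \<open>X\<close> and \<open>M - X\<close> become positive.\<close>

definition interval_sos :: "real \<Rightarrow> real poly \<Rightarrow> bool" where
  "interval_sos M p \<longleftrightarrow>
     (\<exists>a b c. sos a \<and> sos b \<and> sos c \<and> p = a + [:0, 1:] * b + [:M, -1:] * c)"

lemma interval_sos_sos: "sos a \<Longrightarrow> interval_sos M a"
  unfolding interval_sos_def by (rule exI[of _ a], rule exI[of _ 0], rule exI[of _ 0]) simp

lemma X_mult_M_minus_X:
  fixes M :: real
  assumes "M > 0"
  shows "[:0, 1:] * [:M, -1:] = [:1/M:] * ([:0, 1:] * ([:M, -1:] * [:M, -1:]))
                               + [:1/M:] * ([:M, -1:] * ([:0, 1:] * [:0, 1:]))"
proof -
  have "[:0, 1:] * ([:M, -1:] * [:M, -1:]) + [:M, -1:] * ([:0, 1:] * [:0, 1:])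
      = ([:0, 1:] * [:M, -1:]) * [:M:]"
    by (simp add: algebra_simps)
  then have "[:1/M:] * ([:0, 1:] * ([:M, -1:] * [:M, -1:])) + [:1/M:] * ([:M, -1:] * ([:0, 1:] * [:0, 1:]))
      = ([:0, 1:] * [:M, -1:]) * ([:1/M:] * [:M:])"
    by (simp only: distrib_left[symmetric]) (simp add: algebra_simps)
  also have "[:1/M:] * [:M:] = (1::real poly)" using assms by (simp add: one_pCons)
  finally show ?thesis by simp
qed

lemma interval_sos_mult:
  assumes M: "M > 0" and "interval_sos M p" "interval_sos M q"
  shows "interval_sos M (p * q)"
proof -
  obtain a b c where abc: "sos a" "sos b" "sos c" "p = a + [:0, 1:] * b + [:M, -1:] * c"
    using assms(2) unfolding interval_sos_def by blast
  obtain a' b' c' where abc': "sos a'" "sos b'" "sos c'" "q = a' + [:0, 1:] * b' + [:M, -1:] * c'"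
    using assms(3) unfolding interval_sos_def by blast
  define X where "X = [:0, 1::real:]"
  define Y where "Y = [:M, -1::real:]"
  define w where "w = b * c' + c * b'"
  have w: "sos w" unfolding w_def using abc abc' by (intro sos_add sos_mult)
  have "p * q = a * a' + X * X * (b * b') + Y * Y * (c * c') + X * (a * b' + b * a')
                + Y * (a * c' + c * a') + (X * Y) * w"
    unfolding abc abc' X_def[symmetric] Y_def[symmetric] w_def by (simp add: algebra_simps)
  also have "X * Y = [:1/M:] * (X * (Y * Y)) + [:1/M:] * (Y * (X * X))"
    unfolding X_def Y_def by (rule X_mult_M_minus_X[OF M])
  finally have "p * q = (a * a' + X * X * (b * b') + Y * Y * (c * c'))
      + X * (a * b' + b * a' + [:1/M:] * (Y * Y * w)) + Y * (a * c' + c * a' + [:1/M:] * (X * X * w))"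
    by (simp add: algebra_simps)
  moreover have "sos (a * a' + X * X * (b * b') + Y * Y * (c * c'))"
    using abc abc' by (intro sos_add sos_mult sos_square_mult)
  moreover have "sos (a * b' + b * a' + [:1/M:] * (Y * Y * w))"
    using abc abc' w M by (intro sos_add sos_mult sos_square_mult sos_const) auto
  moreover have "sos (a * c' + c * a' + [:1/M:] * (X * X * w))"
    using abc abc' w M by (intro sos_add sos_mult sos_square_mult sos_const) auto
  ultimately show ?thesis unfolding interval_sos_def X_def Y_def by blast
qed

lemma interval_sos_linear_left: "r \<le> 0 \<Longrightarrow> interval_sos M [:-r, 1:]"
  unfolding interval_sos_def
  by (rule exI[of _ "[:-r:]"], rule exI[of _ 1], rule exI[of _ 0])
     (simp add: sos_const sos_square[of 1, simplified])

lemma interval_sos_linear_right: "r \<ge> M \<Longrightarrow> interval_sos M [:r, -1:]"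
  unfolding interval_sos_def
  by (rule exI[of _ "[:r - M:]"], rule exI[of _ 0], rule exI[of _ 1])
     (simp add: sos_const sos_square[of 1, simplified])

lemma poly_nonneg_cancel_factor:
  fixes q :: "real poly"
  assumes "a < b" and pos: "\<And>t. t \<in> {a<..<b} \<Longrightarrow> 0 < c t"
    and nn: "\<And>t. t \<in> {a<..<b} \<Longrightarrow> 0 \<le> c t * poly q t"
  shows "\<forall>t\<in>{a..b}. 0 \<le> poly q t"
proof -
  have "0 \<le> poly q t" if "t \<in> {a<..<b}" for t
    using pos[OF that] nn[OF that] by (simp add: zero_le_mult_iff)
  then have "{a<..<b} \<subseteq> {t. 0 \<le> poly q t}" by blast
  then have "closure {a<..<b} \<subseteq> {t. 0 \<le> poly q t}"
    by (intro closure_minimal closed_Collect_le continuous_intros)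
  then show ?thesis using \<open>a < b\<close> by auto
qed

lemma poly_root_factor:
  fixes p :: "real poly"
  assumes "poly p r = 0" "p \<noteq> 0"
  obtains q where "p = [:-r, 1:] * q" "degree q < degree p"
proof -
  obtain q where q: "p = [:-r, 1:] * q" using assms(1) poly_eq_0_iff_dvd by (metis dvdE)
  with assms(2) have "q \<noteq> 0" by auto
  then have "degree p = degree q + 1"
    unfolding q using degree_mult_eq[of "[:-r, 1:]" q] by simp
  then show ?thesis using that q by simp
qed

definition cpoly :: "real poly \<Rightarrow> complex \<Rightarrow> complex" where
  "cpoly p z = poly (map_poly complex_of_real p) z"

lemma cpoly_pCons [simp]: "cpoly (pCons a p) z = of_real a + z * cpoly p z"
  unfolding cpoly_def by (simp add: map_poly_pCons)

lemma cpoly_0 [simp]: "cpoly 0 z = 0"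
  unfolding cpoly_def by simp

lemma cpoly_add: "cpoly (p + q) z = cpoly p z + cpoly q z"
proof (induction p arbitrary: q rule: pCons_induct)
  case (pCons a p)
  then show ?case by (cases q rule: pCons_cases) (simp add: algebra_simps)
qed simp

lemma cpoly_mult: "cpoly (p * q) z = cpoly p z * cpoly q z"
proof -
  have "cpoly (smult c p) z = of_real c * cpoly p z" for c p
    by (induction p) (simp_all add: algebra_simps)
  then show ?thesis by (induction p) (simp_all add: cpoly_add algebra_simps)
qed

lemma cpoly_of_real: "cpoly p (of_real t) = of_real (poly p t)"
  by (induction p) simp_all

lemma nonreal_root_factor:
  fixes p :: "real poly"
  assumes root: "cpoly p z = 0" and "Im z \<noteq> 0" "p \<noteq> 0"
  obtains q where "p = [:(Re z)\<^sup>2 + (Im z)\<^sup>2, -2 * Re z, 1:] * q" "degree q < degree p"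
proof -
  define Q where "Q = [:(Re z)\<^sup>2 + (Im z)\<^sup>2, -2 * Re z, 1::real:]"
  have Q0: "Q \<noteq> 0" and dQ: "degree Q = 2" unfolding Q_def by simp_all
  have "cpoly Q z = 0"
    unfolding Q_def by (simp add: complex_eq_iff power2_eq_square algebra_simps)
  then have "cpoly (p mod Q) z = 0"
    using root cpoly_add[of "Q * (p div Q)" "p mod Q" z] by (simp add: cpoly_mult)
  define c0 c1 where "c0 = coeff (p mod Q) 0" and "c1 = coeff (p mod Q) 1"
  have "degree (p mod Q) < 2"
    using degree_mod_less[OF Q0, of p] dQ by (cases "p mod Q = 0") auto
  then have ab: "p mod Q = [:c0, c1:]"
    unfolding c0_def c1_def by (intro poly_eqI) (auto simp: coeff_pCons coeff_eq_0 split: nat.split)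
  with \<open>cpoly (p mod Q) z = 0\<close> have "of_real c0 + z * of_real c1 = 0" by simp
  then have "c0 = 0" "c1 = 0"
    using \<open>Im z \<noteq> 0\<close> by (auto simp: complex_eq_iff)
  then have "p mod Q = 0" using ab by simp
  then have pQ: "p = Q * (p div Q)" using div_mult_mod_eq[of p Q] by (simp add: mult.commute)
  with \<open>p \<noteq> 0\<close> have "p div Q \<noteq> 0" by auto
  then have "degree (Q * (p div Q)) = 2 + degree (p div Q)"
    using degree_mult_eq[OF Q0] dQ by simp
  then have "degree p = 2 + degree (p div Q)" using pQ by simp
  then show ?thesis using that[of "p div Q"] pQ unfolding Q_def by simp
qed

lemma sos_root_quadratic: "sos [:(Re z)\<^sup>2 + (Im z)\<^sup>2, -2 * Re z, 1:]"
proof -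
  have "[:(Re z)\<^sup>2 + (Im z)\<^sup>2, -2 * Re z, 1:] = [:-Re z, 1:] * [:-Re z, 1:] + [:Im z:] * [:Im z:]"
    by (simp add: power2_eq_square)
  then show ?thesis by (metis sos_square sos_add_square)
qed

lemma nonneg_on_interval_nonreal_root:
  fixes p :: "real poly"
  assumes nn: "\<forall>t\<in>{0..M}. 0 \<le> poly p t" and "cpoly p z = 0" "Im z \<noteq> 0" "p \<noteq> 0"
  obtains l q where "p = l * q" "sos l" "degree q < degree p" "\<forall>t\<in>{0..M}. 0 \<le> poly q t"
proof -
  define l where "l = [:(Re z)\<^sup>2 + (Im z)\<^sup>2, -2 * Re z, 1::real:]"
  obtain q where q: "p = l * q" "degree q < degree p"
    using nonreal_root_factor[OF assms(2-4)] unfolding l_def by blast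
  have pos: "0 < poly l t" for t
  proof -
    have "poly l t = (t - Re z)\<^sup>2 + (Im z)\<^sup>2" unfolding l_def by (simp add: power2_eq_square algebra_simps)
    then show ?thesis using \<open>Im z \<noteq> 0\<close> by (simp add: add_nonneg_pos)
  qed
  have "\<forall>t\<in>{0..M}. 0 \<le> poly q t"
  proof
    fix t assume "t \<in> {0..M}"
    then have "0 \<le> poly l t * poly q t" using nn unfolding q(1) by simp
    then show "0 \<le> poly q t" using pos[of t] by (simp add: zero_le_mult_iff)
  qed
  then show ?thesis using that q sos_root_quadratic unfolding l_def by blast
qed

lemma nonneg_on_interval_interior_root:
  fixes p :: "real poly"
  assumes nn: "\<forall>t\<in>{0..M}. 0 \<le> poly p t" and r: "0 < r" "r < M"
    and root: "poly p r = 0" and "p \<noteq> 0"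
  obtains q where "p = ([:-r, 1:] * [:-r, 1:]) * q" "degree q < degree p"
    "\<forall>t\<in>{0..M}. 0 \<le> poly q t"
proof -
  obtain q1 where q1: "p = [:-r, 1:] * q1" "degree q1 < degree p"
    using poly_root_factor[OF root \<open>p \<noteq> 0\<close>] by blast
  have p1: "poly p t = (t - r) * poly q1 t" for t unfolding q1(1) by (simp add: algebra_simps)
  have "\<forall>t\<in>{r..M}. 0 \<le> poly q1 t"
    by (rule poly_nonneg_cancel_factor[of _ _ "\<lambda>t. t - r"]) (use r nn p1 in auto)
  then have "0 \<le> poly q1 r" using r by simp
  moreover have "\<forall>t\<in>{0..r}. 0 \<le> poly (- q1) t"
    by (rule poly_nonneg_cancel_factor[of _ _ "\<lambda>t. r - t"])
       (use r nn p1 in \<open>auto simp: algebra_simps\<close>)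
  then have "poly q1 r \<le> 0" using r by simp
  ultimately have "poly q1 r = 0" by simp
  moreover have "q1 \<noteq> 0" using q1(1) \<open>p \<noteq> 0\<close> by auto
  ultimately obtain q where q: "q1 = [:-r, 1:] * q" "degree q < degree q1"
    using poly_root_factor by blast
  have pq: "p = ([:-r, 1:] * [:-r, 1:]) * q" unfolding q1(1) q(1) by (simp only: mult.assoc)
  have p2: "poly p t = (t - r)\<^sup>2 * poly q t" for t unfolding pq by (simp add: power2_eq_square algebra_simps)
  have left: "\<forall>t\<in>{0..r}. 0 \<le> poly q t"
    by (rule poly_nonneg_cancel_factor[of _ _ "\<lambda>t. (t - r)\<^sup>2"]) (use r nn p2 in auto)
  have right: "\<forall>t\<in>{r..M}. 0 \<le> poly q t"
    by (rule poly_nonneg_cancel_factor[of _ _ "\<lambda>t. (t - r)\<^sup>2"]) (use r nn p2 in auto)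
  have "0 \<le> poly q t" if "t \<in> {0..M}" for t
    using left right that by (cases "t \<le> r") auto
  moreover have "degree q < degree p" using q(2) q1(2) by simp
  ultimately show ?thesis by (intro that[OF pq]) auto
qed

lemma nonneg_on_interval_real_root:
  fixes p :: "real poly"
  assumes M: "M > 0" and nn: "\<forall>t\<in>{0..M}. 0 \<le> poly p t"
    and root: "poly p r = 0" and "p \<noteq> 0"
  obtains l q where "p = l * q" "interval_sos M l" "degree q < degree p"
    "\<forall>t\<in>{0..M}. 0 \<le> poly q t"
proof -
  obtain q where q: "p = [:-r, 1:] * q" "degree q < degree p"
    using poly_root_factor[OF root \<open>p \<noteq> 0\<close>] by blast
  have pq: "poly p t = (t - r) * poly q t" for t unfolding q(1) by (simp add: algebra_simps)
  consider "r \<le> 0" | "r \<ge> M" | "0 < r \<and> r < M" by linarith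
  then show ?thesis
  proof cases
    case 1
    have "\<forall>t\<in>{0..M}. 0 \<le> poly q t"
      by (rule poly_nonneg_cancel_factor[of _ _ "\<lambda>t. t - r"]) (use M 1 nn pq in auto)
    then show ?thesis using that q interval_sos_linear_left[OF 1] by blast
  next
    case 2
    have "\<forall>t\<in>{0..M}. 0 \<le> poly (- q) t"
      by (rule poly_nonneg_cancel_factor[of _ _ "\<lambda>t. r - t"])
         (use M 2 nn pq in \<open>auto simp: algebra_simps\<close>)
    moreover have "p = [:r, -1:] * - q" using q(1) by simp
    ultimately show ?thesis using that q(2) interval_sos_linear_right[OF 2] by fastforce
  next
    case 3
    then obtain q where "p = ([:-r, 1:] * [:-r, 1:]) * q" "degree q < degree p"
      "\<forall>t\<in>{0..M}. 0 \<le> poly q t"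
      using nonneg_on_interval_interior_root[OF nn _ _ root \<open>p \<noteq> 0\<close>] by blast
    then show ?thesis using that interval_sos_sos[OF sos_square] by blast
  qed
qed

theorem nonneg_on_interval_imp_interval_sos:
  fixes p :: "real poly"
  assumes M: "M > 0"
  shows "\<forall>t\<in>{0..M}. 0 \<le> poly p t \<Longrightarrow> interval_sos M p"
proof (induction "degree p" arbitrary: p rule: less_induct)
  case less
  show ?case
  proof (cases "degree p = 0")
    case True
    then obtain c where c: "p = [:c:]" by (rule degree_eq_zeroE)
    then have "c \<ge> 0" using less.prems M by force
    then show ?thesis using c by (simp add: interval_sos_sos sos_const)
  next
    case False
    then have "\<not> constant (poly (map_poly complex_of_real p))"
      by (simp add: constant_degree degree_map_poly)
    then obtain z where z: "cpoly p z = 0"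
      unfolding cpoly_def using fundamental_theorem_of_algebra by blast
    have "p \<noteq> 0" using False by auto
    obtain l q where lq: "p = l * q" "interval_sos M l" "degree q < degree p"
      "\<forall>t\<in>{0..M}. 0 \<le> poly q t"
    proof (cases "Im z = 0")
      case True
      then have "poly p (Re z) = 0" using z cpoly_of_real[of p "Re z"] by (simp add: complex_is_Real_iff)
      then show ?thesis using nonneg_on_interval_real_root[OF M less.prems _ \<open>p \<noteq> 0\<close>] that by blast
    next
      case False
      then obtain l q where "p = l * q" "sos l" "degree q < degree p" "\<forall>t\<in>{0..M}. 0 \<le> poly q t"
        using nonneg_on_interval_nonreal_root[OF less.prems z _ \<open>p \<noteq> 0\<close>] by blast
      then show ?thesis using that interval_sos_sos by blast
    qed
    have "interval_sos M q" using less.hyps lq(3,4) by blast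
    then show ?thesis using lq(1,2) interval_sos_mult[OF M] by simp
  qed
qed


section \<open>Polynomials of positive operators\<close>

definition sadj :: "('a::chilbert \<Rightarrow> 'a) \<Rightarrow> bool" where
  "sadj T \<longleftrightarrow> (\<forall>x y. cinner (T x) y = cinner x (T y))"

definition posop :: "('a::chilbert \<Rightarrow> 'a) \<Rightarrow> bool" where
  "posop P \<longleftrightarrow> bounded_linear P \<and> sadj P \<and> (\<forall>x. 0 \<le> Re (cinner (P x) x))"

lemma posopD:
  assumes "posop P"
  shows "bounded_linear P" "linear P" "sadj P" "0 \<le> Re (cinner (P x) x)"
  using assms unfolding posop_def by (auto intro: bounded_linear.linear)

lemma posop_adj_comp:
  assumes A: "bounded_op A"
  shows "posop (adj A \<circ> A)" "cinner ((adj A \<circ> A) x) y = cinner (A x) (A y)"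
proof -
  show *: "cinner ((adj A \<circ> A) x) y = cinner (A x) (A y)" for x y
    by (simp add: cinner_adj_left[OF A])
  have "bounded_linear (adj A \<circ> A)"
    using A bounded_op_adj[OF A] unfolding bounded_op_def comp_def
    by (blast intro: bounded_linear_compose)
  moreover have "sadj (adj A \<circ> A)"
    unfolding sadj_def by (simp add: cinner_adj_right[OF A] cinner_adj_left[OF A])
  ultimately show "posop (adj A \<circ> A)"
    unfolding posop_def * by (simp add: cinner_self del: of_real_power)
qed

lemma poly_op_sum:
  assumes "degree p \<le> n"
  shows "poly_op p P x = (\<Sum>k\<le>n. coeff p k *\<^sub>R (P ^^ k) x)"
  unfolding poly_op_def
  by (rule sum.mono_neutral_left) (use assms in \<open>auto simp: coeff_eq_0\<close>)

lemma poly_op_pCons: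
  assumes "linear P"
  shows "poly_op (pCons a p) P x = a *\<^sub>R x + P (poly_op p P x)"
proof -
  interpret linear P by fact
  have "poly_op (pCons a p) P x = (\<Sum>k\<le>Suc (degree p). coeff (pCons a p) k *\<^sub>R (P ^^ k) x)"
    by (rule poly_op_sum) (simp add: degree_pCons_le)
  also have "\<dots> = a *\<^sub>R x + (\<Sum>k\<le>degree p. coeff p k *\<^sub>R (P ^^ Suc k) x)"
    by (subst sum.atMost_Suc_shift) simp
  finally show ?thesis unfolding poly_op_def by (simp add: sum scale)
qed

lemma poly_op_0 [simp]: "poly_op 0 P x = 0"
  unfolding poly_op_def by simp

lemma poly_op_const: "poly_op [:c:] P x = c *\<^sub>R x"
  unfolding poly_op_def by simp

lemma poly_op_X: "linear P \<Longrightarrow> poly_op [:0, 1:] P x = P x"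
  by (simp add: poly_op_pCons poly_op_const)

lemma poly_op_add: "poly_op (p + q) P x = poly_op p P x + poly_op q P x"
proof -
  define n where "n = max (degree p) (degree q)"
  have "poly_op (p + q) P x = (\<Sum>k\<le>n. coeff (p + q) k *\<^sub>R (P ^^ k) x)"
    by (rule poly_op_sum) (simp add: n_def degree_add_le)
  also have "\<dots> = (\<Sum>k\<le>n. coeff p k *\<^sub>R (P ^^ k) x) + (\<Sum>k\<le>n. coeff q k *\<^sub>R (P ^^ k) x)"
    by (simp add: scaleR_add_left sum.distrib)
  also have "\<dots> = poly_op p P x + poly_op q P x"
    using poly_op_sum[of p n P x] poly_op_sum[of q n P x] by (simp add: n_def)
  finally show ?thesis .
qed

lemma poly_op_smult: "poly_op (smult c p) P x = c *\<^sub>R poly_op p P x"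
proof -
  have "poly_op (smult c p) P x = (\<Sum>k\<le>degree p. coeff (smult c p) k *\<^sub>R (P ^^ k) x)"
    by (rule poly_op_sum) (rule degree_smult_le)
  then show ?thesis unfolding poly_op_def by (simp add: scaleR_sum_right)
qed

lemma poly_op_diff: "poly_op (p - q) P x = poly_op p P x - poly_op q P x"
  using poly_op_add[of p "- q" P x] poly_op_smult[of "- 1" q P x] by simp

lemma poly_op_mult:
  assumes "linear P"
  shows "poly_op (p * q) P x = poly_op p P (poly_op q P x)"
proof (induction p)
  case (pCons a p)
  have "poly_op (pCons a p * q) P x = poly_op (smult a q + pCons 0 (p * q)) P x"
    by simp
  also have "\<dots> = poly_op (pCons a p) P (poly_op q P x)"
    by (simp add: poly_op_add poly_op_smult poly_op_pCons[OF assms] pCons.IH)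
  finally show ?case .
qed simp

lemma bounded_linear_poly_op:
  assumes "bounded_linear P"
  shows "bounded_linear (poly_op p P)"
proof (induction p)
  case 0
  then show ?case by (simp add: bounded_linear_zero poly_op_def)
next
  case (pCons a p)
  have "bounded_linear (\<lambda>x. a *\<^sub>R x + P (poly_op p P x))"
    by (intro bounded_linear_add bounded_linear_scaleR_right bounded_linear_compose[OF assms] pCons.IH)
  then show ?case by (simp add: poly_op_pCons[OF bounded_linear.linear[OF assms]])
qed

lemma sadj_poly_op:
  assumes l: "linear P" and s: "sadj P"
  shows "sadj (poly_op p P)"
proof (induction p)
  case 0
  then show ?case unfolding sadj_def by simp
next
  case (pCons a p)
  have "P (poly_op p P y) = poly_op p P (P y)" for y
    using poly_op_mult[OF l, of "[:0, 1:]" p] poly_op_mult[OF l, of p "[:0, 1:]"]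
    by (simp add: poly_op_X[OF l] mult.commute)
  then show ?case
    using s pCons.IH
    by (simp add: sadj_def poly_op_pCons[OF l] cinner_add_left cinner_add_right
        cinner_scaleR_left cinner_scaleR_right)
qed

lemma cinner_poly_op_square:
  assumes "posop P"
  shows "cinner (poly_op (p * p) P x) y = cinner (poly_op p P x) (poly_op p P y)"
  using sadj_poly_op[OF posopD(2,3)[OF assms], of p]
  by (simp add: sadj_def poly_op_mult[OF posopD(2)[OF assms]])

lemma cinner_le_onorm:
  assumes "bounded_linear P"
  shows "Re (cinner (P y) y) \<le> onorm P * (norm y)\<^sup>2"
proof -
  have "Re (cinner (P y) y) \<le> norm (P y) * norm y"
    using complex_Re_le_cmod cmod_cinner_le order_trans by blast
  also have "\<dots> \<le> onorm P * norm y * norm y"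
    using onorm[OF assms, of y] by (simp add: mult_right_mono)
  finally show ?thesis by (simp add: power2_eq_square mult.assoc)
qed

lemma poly_op_sos_mult_nonneg:
  assumes P: "posop P" and q: "\<And>y. 0 \<le> Re (cinner (poly_op q P y) y)" and "sos s"
  shows "0 \<le> Re (cinner (poly_op (q * s) P x) x)"
  using \<open>sos s\<close>
proof (induction s rule: sos.induct)
  case (sos_add_square s r)
  have l: "linear P" using posopD[OF P] by blast
  have "q * (r * r + s) = r * (q * r) + q * s" by (simp add: algebra_simps)
  then have "poly_op (q * (r * r + s)) P x
      = poly_op r P (poly_op q P (poly_op r P x)) + poly_op (q * s) P x"
    by (simp add: poly_op_add poly_op_mult[OF l])
  moreover have "cinner (poly_op r P (poly_op q P (poly_op r P x))) x
      = cinner (poly_op q P (poly_op r P x)) (poly_op r P x)"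
    using sadj_poly_op[OF posopD(2,3)[OF P], of r] unfolding sadj_def by simp
  ultimately show ?case using sos_add_square.IH q[of "poly_op r P x"] by (simp add: cinner_add_left)
qed simp

lemma interval_sos_poly_op_nonneg:
  assumes P: "posop P" and M: "onorm P \<le> M" and p: "interval_sos M p"
  shows "0 \<le> Re (cinner (poly_op p P x) x)"
proof -
  have l: "linear P" using posopD[OF P] by blast
  obtain a b c where abc: "sos a" "sos b" "sos c" "p = a + [:0, 1:] * b + [:M, -1:] * c"
    using p unfolding interval_sos_def by auto
  have q1: "0 \<le> Re (cinner (poly_op 1 P y) y)" for y
    by (simp add: poly_op_def cinner_self)
  have qX: "0 \<le> Re (cinner (poly_op [:0, 1:] P y) y)" for y
    by (simp add: poly_op_X[OF l] posopD(4)[OF P])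
  have qY: "0 \<le> Re (cinner (poly_op [:M, -1:] P y) y)" for y
  proof -
    have "Re (cinner (P y) y) \<le> M * (norm y)\<^sup>2"
      using cinner_le_onorm[OF posopD(1)[OF P], of y] M
      by (meson mult_right_mono order_trans zero_le_power2)
    then show ?thesis
      by (simp add: poly_op_pCons[OF l] poly_op_const linear_0[OF l] linear_neg[OF l] cinner_diff_left
          cinner_scaleR_left cinner_self)
  qed
  have "poly_op p P x = poly_op (1 * a) P x + poly_op ([:0, 1:] * b) P x + poly_op ([:M, -1:] * c) P x"
    unfolding abc(4) by (simp add: poly_op_add)
  then show ?thesis
    using poly_op_sos_mult_nonneg[OF P q1 abc(1), of x] poly_op_sos_mult_nonneg[OF P qX abc(2), of x]
      poly_op_sos_mult_nonneg[OF P qY abc(3), of x]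
    by (simp add: cinner_add_left)
qed

theorem poly_op_nonneg:
  assumes P: "posop P" and nn: "\<forall>t\<in>{0..onorm P}. 0 \<le> poly p t"
  shows "0 \<le> Re (cinner (poly_op p P x) x)"
proof (cases "onorm P = 0")
  case True
  then have "P y = 0" for y using onorm_eq_0[OF posopD(1)[OF P]] by blast
  then have "poly_op p P x = poly p 0 *\<^sub>R x"
    by (induction p) (simp_all add: poly_op_pCons[OF posopD(2)[OF P]])
  moreover have "0 \<le> poly p 0" using nn True by simp
  ultimately show ?thesis by (simp add: cinner_scaleR_left cinner_self)
next
  case False
  then have "onorm P > 0" using onorm_pos_le[OF posopD(1)[OF P]] by linarith
  then have "interval_sos (onorm P) p" using nonneg_on_interval_imp_interval_sos nn by blast
  then show ?thesis by (rule interval_sos_poly_op_nonneg[OF P order_refl])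
qed

lemma onorm_poly_op_le:
  assumes P: "posop P" and b: "\<forall>t\<in>{0..onorm P}. \<bar>poly p t\<bar> \<le> m"
  shows "onorm (poly_op p P) \<le> m"
proof -
  have l: "linear P" using posopD[OF P] by blast
  have m0: "0 \<le> m" using b onorm_pos_le[OF posopD(1)[OF P]] by force
  have "norm (poly_op p P x) \<le> m * norm x" for x
  proof -
    have "\<forall>t\<in>{0..onorm P}. 0 \<le> poly ([:m * m:] - p * p) t"
    proof
      fix t assume "t \<in> {0..onorm P}"
      then have "\<bar>poly p t\<bar> \<le> \<bar>m\<bar>" using b m0 by auto
      then show "0 \<le> poly ([:m * m:] - p * p) t" by (simp add: abs_le_square_iff power2_eq_square)
    qed
    then have "0 \<le> Re (cinner (poly_op ([:m * m:] - p * p) P x) x)"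
      by (rule poly_op_nonneg[OF P])
    then have "(norm (poly_op p P x))\<^sup>2 \<le> (m * norm x)\<^sup>2"
      by (simp add: poly_op_diff poly_op_const cinner_poly_op_square[OF P] cinner_diff_left
          cinner_scaleR_left cinner_self power2_eq_square mult_ac)
    then show ?thesis using m0 by (simp add: power2_le_iff_abs_le)
  qed
  then show ?thesis using m0 by (intro onorm_bound) auto
qed


section \<open>Continuous functional calculus\<close>

lemma polynomial_uniform_approx:
  fixes f :: "real \<Rightarrow> real"
  assumes "continuous_on {a..b} f"
  obtains p :: "nat \<Rightarrow> real poly" where "uniform_limit {a..b} (\<lambda>n t. poly (p n) t) f sequentially"
proof -
  have "\<exists>q::real poly. \<forall>t\<in>{a..b}. \<bar>f t - poly q t\<bar> < 1 / (real n + 1)" for n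
  proof -
    obtain g where g: "real_polynomial_function g" "\<And>t. t \<in> {a..b} \<Longrightarrow> \<bar>f t - g t\<bar> < 1 / (real n + 1)"
      using Stone_Weierstrass_real_polynomial_function[OF compact_Icc assms, of "1 / (real n + 1)"]
      by auto
    obtain c k where "g = (\<lambda>t. \<Sum>i\<le>k. c i * t ^ i)"
      using real_polynomial_function_imp_sum[OF g(1)] by blast
    then have "poly (\<Sum>i\<le>k. monom (c i) i) t = g t" for t by (simp add: poly_sum poly_monom)
    then show ?thesis using g(2) by metis
  qed
  then obtain p where p: "\<And>n t. t \<in> {a..b} \<Longrightarrow> \<bar>f t - poly (p n) t\<bar> < 1 / (real n + 1)"
    by metis
  have "uniform_limit {a..b} (\<lambda>n t. poly (p n) t) f sequentially"
  proof (rule uniform_limitI)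
    fix e :: real assume "e > 0"
    then obtain N :: nat where N: "N > 0" "inverse (real N) < e" using ex_inverse_of_nat_less by blast
    show "\<forall>\<^sub>F n in sequentially. \<forall>t\<in>{a..b}. dist (poly (p n) t) (f t) < e"
    proof (rule eventually_sequentiallyI[of N], intro ballI)
      fix n t assume "N \<le> n" "t \<in> {a..b}"
      moreover have "1 / (real n + 1) \<le> 1 / real N" using N \<open>N \<le> n\<close> by (intro divide_left_mono) auto
      ultimately show "dist (poly (p n) t) (f t) < e"
        using p[of t n] N by (simp add: dist_real_def abs_minus_commute inverse_eq_divide)
    qed
  qed
  then show ?thesis by (rule that)
qed

lemma onorm_poly_op_tendsto_0:
  assumes P: "posop P" and r: "uniform_limit {0..onorm P} (\<lambda>n t. poly (r n) t) (\<lambda>t. 0) sequentially"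
  shows "(\<lambda>n. onorm (poly_op (r n) P)) \<longlonglongrightarrow> 0"
proof (rule tendstoI)
  fix e :: real assume "e > 0"
  then have "e/2 > 0" by simp
  from uniform_limitD[OF r this]
  show "\<forall>\<^sub>F n in sequentially. dist (onorm (poly_op (r n) P)) 0 < e"
  proof (rule eventually_mono)
    fix n assume "\<forall>t\<in>{0..onorm P}. dist (poly (r n) t) 0 < e/2"
    then have "onorm (poly_op (r n) P) \<le> e/2"
      by (intro onorm_poly_op_le[OF P]) (simp add: dist_real_def less_imp_le)
    then show "dist (onorm (poly_op (r n) P)) 0 < e"
      using \<open>e > 0\<close> onorm_pos_le[OF bounded_linear_poly_op[OF posopD(1)[OF P]]] by simp
  qed
qed

lemma poly_op_Cauchy:
  assumes P: "posop P" and p: "uniform_limit {0..onorm P} (\<lambda>n t. poly (p n) t) f sequentially"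
  shows "Cauchy (\<lambda>n. Blinfun (poly_op (p n) P))"
proof (rule metric_CauchyI)
  fix e :: real assume "e > 0"
  have "uniformly_Cauchy_on {0..onorm P} (\<lambda>n t. poly (p n) t)"
    using p by (intro uniformly_convergent_Cauchy uniformly_convergentI)
  then obtain N where N: "\<And>t m n. t \<in> {0..onorm P} \<Longrightarrow> m \<ge> N \<Longrightarrow> n \<ge> N
      \<Longrightarrow> dist (poly (p m) t) (poly (p n) t) < e/2"
    using \<open>e > 0\<close> unfolding uniformly_Cauchy_on_def by (meson half_gt_zero)
  have bl: "bounded_linear (poly_op q P)" for q
    by (rule bounded_linear_poly_op[OF posopD(1)[OF P]])
  have "dist (Blinfun (poly_op (p m) P)) (Blinfun (poly_op (p n) P)) < e" if "m \<ge> N" "n \<ge> N" for m n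
  proof -
    have "onorm (poly_op (p m - p n) P) \<le> e/2"
      using N[OF _ that] by (intro onorm_poly_op_le[OF P]) (simp add: dist_real_def less_imp_le)
    moreover have "poly_op (p m - p n) P = (\<lambda>x. poly_op (p m) P x - poly_op (p n) P x)"
      by (simp add: fun_eq_iff poly_op_diff)
    ultimately show ?thesis
      using \<open>e > 0\<close> by (simp add: dist_norm norm_blinfun.rep_eq minus_blinfun.rep_eq
          bounded_linear_Blinfun_apply[OF bl] fun_diff_def)
  qed
  then show "\<exists>M. \<forall>m\<ge>M. \<forall>n\<ge>M. dist (Blinfun (poly_op (p m) P)) (Blinfun (poly_op (p n) P)) < e"
    by blast
qed

definition is_fcalc :: "('a::chilbert \<Rightarrow> 'a) \<Rightarrow> (real \<Rightarrow> real) \<Rightarrow> ('a \<Rightarrow> 'a) \<Rightarrow> bool" where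
  "is_fcalc P f T \<longleftrightarrow> bounded_linear T \<and>
     (\<forall>p :: nat \<Rightarrow> real poly.
        uniform_limit {0..onorm P} (\<lambda>n t. poly (p n) t) f sequentially \<longrightarrow>
        (\<lambda>n. onorm (\<lambda>x. poly_op (p n) P x - T x)) \<longlonglongrightarrow> 0)"

lemma is_fcalc_exists:
  assumes P: "posop P" and f: "continuous_on {0..onorm P} f"
  shows "\<exists>T. is_fcalc P f T"
proof -
  have bl: "bounded_linear (poly_op q P)" for q
    by (rule bounded_linear_poly_op[OF posopD(1)[OF P]])
  obtain p where p: "uniform_limit {0..onorm P} (\<lambda>n t. poly (p n) t) f sequentially"
    using polynomial_uniform_approx[OF f] by blast
  obtain L where L: "(\<lambda>n. Blinfun (poly_op (p n) P)) \<longlonglongrightarrow> L"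
    using poly_op_Cauchy[OF P p] Cauchy_convergent_iff convergent_def by blast
  define T where "T = blinfun_apply L"
  have "(\<lambda>n. norm (Blinfun (poly_op (p n) P) - L)) \<longlonglongrightarrow> 0"
    using L by (intro tendsto_norm_zero LIM_zero)
  then have pT: "(\<lambda>n. onorm (\<lambda>x. poly_op (p n) P x - T x)) \<longlonglongrightarrow> 0"
    by (simp add: norm_blinfun.rep_eq minus_blinfun.rep_eq bounded_linear_Blinfun_apply[OF bl]
        T_def fun_diff_def)
  have "(\<lambda>n. onorm (\<lambda>x. poly_op (q n) P x - T x)) \<longlonglongrightarrow> 0"
    if q: "uniform_limit {0..onorm P} (\<lambda>n t. poly (q n) t) f sequentially" for q
  proof (rule Lim_null_comparison)
    have "uniform_limit {0..onorm P} (\<lambda>n t. poly (q n - p n) t) (\<lambda>t. 0) sequentially"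
      using uniform_limit_minus[OF q p] by (simp only: poly_diff diff_self)
    then have "(\<lambda>n. onorm (poly_op (q n - p n) P)) \<longlonglongrightarrow> 0"
      by (rule onorm_poly_op_tendsto_0[OF P])
    moreover have "poly_op (q n - p n) P = (\<lambda>x. poly_op (q n) P x - poly_op (p n) P x)" for n
      by (simp add: fun_eq_iff poly_op_diff)
    ultimately have "(\<lambda>n. onorm (\<lambda>x. poly_op (q n) P x - poly_op (p n) P x)) \<longlonglongrightarrow> 0"
      by (simp only:)
    then show "(\<lambda>n. onorm (\<lambda>x. poly_op (q n) P x - poly_op (p n) P x)
        + onorm (\<lambda>x. poly_op (p n) P x - T x)) \<longlonglongrightarrow> 0"
      using tendsto_add[OF _ pT] by simp
    have "onorm (\<lambda>x. poly_op (q n) P x - T x)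
        \<le> onorm (\<lambda>x. poly_op (q n) P x - poly_op (p n) P x) + onorm (\<lambda>x. poly_op (p n) P x - T x)" for n
      using onorm_triangle[of "\<lambda>x. poly_op (q n) P x - poly_op (p n) P x" "\<lambda>x. poly_op (p n) P x - T x"]
      by (simp add: bl T_def bounded_linear_sub blinfun.bounded_linear_right)
    then show "\<forall>\<^sub>F n in sequentially. norm (onorm (\<lambda>x. poly_op (q n) P x - T x))
        \<le> onorm (\<lambda>x. poly_op (q n) P x - poly_op (p n) P x) + onorm (\<lambda>x. poly_op (p n) P x - T x)"
      by (simp add: onorm_pos_le bl T_def bounded_linear_sub blinfun.bounded_linear_right)
  qed
  then show ?thesis unfolding is_fcalc_def T_def by (blast intro: blinfun.bounded_linear_right)
qed

lemma is_fcalc_unique: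
  assumes P: "posop P" and f: "continuous_on {0..onorm P} f"
    and T1: "is_fcalc P f T1" and T2: "is_fcalc P f T2"
  shows "T1 = T2"
proof -
  obtain p where p: "uniform_limit {0..onorm P} (\<lambda>n t. poly (p n) t) f sequentially"
    using polynomial_uniform_approx[OF f] by blast
  have b: "bounded_linear T1" "bounded_linear T2" "bounded_linear (poly_op q P)" for q
    using T1 T2 bounded_linear_poly_op[OF posopD(1)[OF P]] unfolding is_fcalc_def by auto
  have "(\<lambda>n. onorm (\<lambda>x. poly_op (p n) P x - T x)) \<longlonglongrightarrow> 0" if "is_fcalc P f T" for T
    using that p unfolding is_fcalc_def by blast
  from tendsto_add[OF this[OF T2] this[OF T1]]
  have lim: "(\<lambda>n. onorm (\<lambda>x. poly_op (p n) P x - T2 x) + onorm (\<lambda>x. poly_op (p n) P x - T1 x))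
      \<longlonglongrightarrow> 0"
    by simp
  have "onorm (\<lambda>x. T1 x - T2 x)
      \<le> onorm (\<lambda>x. poly_op (p n) P x - T2 x) + onorm (\<lambda>x. poly_op (p n) P x - T1 x)" for n
    using onorm_triangle[of "\<lambda>x. poly_op (p n) P x - T2 x" "\<lambda>x. - (poly_op (p n) P x - T1 x)"]
      onorm_neg[of "\<lambda>x. poly_op (p n) P x - T1 x"]
    by (simp add: b bounded_linear_sub bounded_linear_minus)
  then have "onorm (\<lambda>x. T1 x - T2 x) \<le> 0"
    by (intro tendsto_lowerbound[OF lim] always_eventually) auto
  then have "onorm (\<lambda>x. T1 x - T2 x) = 0"
    using onorm_pos_le[OF bounded_linear_sub[OF b(1,2)]] by linarith
  then show ?thesis using onorm_eq_0[OF bounded_linear_sub[OF b(1,2)]] by auto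
qed

lemma is_fcalc_fcalc:
  assumes "posop P" "continuous_on {0..onorm P} f"
  shows "is_fcalc P f (fcalc f P)"
proof -
  obtain T where T: "is_fcalc P f T" using is_fcalc_exists[OF assms] by blast
  have "fcalc f P = T"
    unfolding fcalc_def is_fcalc_def[symmetric]
    using T is_fcalc_unique[OF assms _ T] by (rule the_equality)
  then show ?thesis using T by simp
qed

lemma bounded_linear_fcalc:
  assumes "posop P" "continuous_on {0..onorm P} f"
  shows "bounded_linear (fcalc f P)"
  using is_fcalc_fcalc[OF assms] unfolding is_fcalc_def by blast

lemma fcalc_tendsto:
  assumes P: "posop P" and f: "continuous_on {0..onorm P} f"
    and p: "uniform_limit {0..onorm P} (\<lambda>n t. poly (p n) t) f sequentially"
  shows "(\<lambda>n. poly_op (p n) P x) \<longlonglongrightarrow> fcalc f P x"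
proof -
  have bl: "bounded_linear (\<lambda>x. poly_op (p n) P x - fcalc f P x)" for n
    by (intro bounded_linear_sub bounded_linear_poly_op[OF posopD(1)[OF P]] bounded_linear_fcalc[OF P f])
  have "(\<lambda>n. onorm (\<lambda>x. poly_op (p n) P x - fcalc f P x)) \<longlonglongrightarrow> 0"
    using is_fcalc_fcalc[OF P f] p unfolding is_fcalc_def by blast
  then have "(\<lambda>n. onorm (\<lambda>x. poly_op (p n) P x - fcalc f P x) * norm x) \<longlonglongrightarrow> 0"
    using tendsto_mult_left_zero by blast
  then have "(\<lambda>n. poly_op (p n) P x - fcalc f P x) \<longlonglongrightarrow> 0"
    by (rule Lim_null_comparison[rotated]) (simp add: onorm[OF bl])
  then show ?thesis by (rule LIM_zero_cancel)
qed

lemma fcalc_cong: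
  assumes "\<And>t. t \<in> {0..onorm P} \<Longrightarrow> f t = g t"
  shows "fcalc f P = fcalc g P"
  unfolding fcalc_def by (simp only: uniform_limit_cong'[OF refl assms])

lemma fcalc_poly:
  assumes P: "posop P"
  shows "fcalc (poly q) P = poly_op q P"
proof
  fix x
  have "uniform_limit {0..onorm P} (\<lambda>n. poly q) (poly q) sequentially"
    by (rule uniform_limit_const)
  then have "(\<lambda>n. poly_op q P x) \<longlonglongrightarrow> fcalc (poly q) P x"
    by (intro fcalc_tendsto[OF P] continuous_intros)
  then show "fcalc (poly q) P x = poly_op q P x" using LIMSEQ_unique tendsto_const by blast
qed

lemma fcalc_id:
  assumes P: "posop P"
  shows "fcalc (\<lambda>t. t) P = P"
proof -
  have "fcalc (\<lambda>t. t) P = fcalc (poly [:0, 1:]) P" by (rule fcalc_cong) simp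
  then show ?thesis by (simp add: fcalc_poly[OF P] fun_eq_iff poly_op_X[OF posopD(2)[OF P]])
qed

lemma sadj_fcalc:
  assumes P: "posop P" and f: "continuous_on {0..onorm P} f"
  shows "sadj (fcalc f P)"
  unfolding sadj_def
proof (intro allI)
  fix x y
  obtain p where p: "uniform_limit {0..onorm P} (\<lambda>n t. poly (p n) t) f sequentially"
    using polynomial_uniform_approx[OF f] by blast
  have "(\<lambda>n. cinner (poly_op (p n) P x) y) \<longlonglongrightarrow> cinner (fcalc f P x) y"
    by (intro tendsto_cinner_left fcalc_tendsto[OF P f p])
  moreover have "(\<lambda>n. cinner x (poly_op (p n) P y)) \<longlonglongrightarrow> cinner x (fcalc f P y)"
    by (rule bounded_bilinear.tendsto[OF bounded_bilinear_cinner tendsto_const fcalc_tendsto[OF P f p]])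
  moreover have "cinner (poly_op (p n) P x) y = cinner x (poly_op (p n) P y)" for n
    using sadj_poly_op[OF posopD(2,3)[OF P]] unfolding sadj_def by blast
  ultimately show "cinner (fcalc f P x) y = cinner x (fcalc f P y)" using LIMSEQ_unique by auto
qed

text \<open>Positivity passes to uniform limits: a uniform \<open>\<epsilon>\<close>-perturbation of \<open>r\<^sub>n\<close> is
nonnegative on the interval, hence gives a positive operator.\<close>

lemma poly_op_limit_nonneg:
  assumes P: "posop P" and r: "uniform_limit {0..onorm P} (\<lambda>n t. poly (r n) t) g sequentially"
    and g: "\<And>t. t \<in> {0..onorm P} \<Longrightarrow> 0 \<le> g t"
    and lim: "(\<lambda>n. Re (cinner (poly_op (r n) P x) x)) \<longlonglongrightarrow> H"
  shows "0 \<le> H"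
proof (rule field_le_epsilon)
  fix e :: real assume e: "e > 0"
  define \<epsilon> where "\<epsilon> = e / ((norm x)\<^sup>2 + 1)"
  have d: "(norm x)\<^sup>2 + 1 > 0" by (simp add: add_nonneg_pos)
  have \<epsilon>: "\<epsilon> > 0" unfolding \<epsilon>_def using e d by simp
  have "\<epsilon> * (norm x)\<^sup>2 \<le> \<epsilon> * ((norm x)\<^sup>2 + 1)" using \<epsilon> by simp
  also have "\<dots> = e" unfolding \<epsilon>_def using d by simp
  finally have \<epsilon>e: "\<epsilon> * (norm x)\<^sup>2 \<le> e" .
  have "- e \<le> Re (cinner (poly_op (r n) P x) x)"
    if close: "\<forall>t\<in>{0..onorm P}. dist (poly (r n) t) (g t) < \<epsilon>" for n
  proof -
    have "0 \<le> poly (r n + [:\<epsilon>:]) t" if "t \<in> {0..onorm P}" for t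
      using close[rule_format, OF that] g[OF that] by (simp add: dist_real_def abs_less_iff)
    then have "0 \<le> Re (cinner (poly_op (r n + [:\<epsilon>:]) P x) x)"
      by (intro poly_op_nonneg[OF P] ballI)
    then show ?thesis
      using \<epsilon>e by (simp add: poly_op_add poly_op_const cinner_add_left cinner_scaleR_left cinner_self)
  qed
  then have "\<forall>\<^sub>F n in sequentially. - e \<le> Re (cinner (poly_op (r n) P x) x)"
    by (rule eventually_mono[OF uniform_limitD[OF r \<epsilon>]])
  then have "- e \<le> H" by (rule tendsto_lowerbound[OF lim]) simp
  then show "0 \<le> H + e" by simp
qed

theorem fcalc_ineq:
  assumes P: "posop P" and u: "continuous_on {0..onorm P} u" and v: "continuous_on {0..onorm P} v"
    and h: "\<And>t. t \<in> {0..onorm P} \<Longrightarrow> a + c * v t \<le> u t"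
  shows "a * (norm x)\<^sup>2 + c * Re (cinner (fcalc v P x) x) \<le> Re (cinner (fcalc u P x) x)"
proof -
  obtain p where p: "uniform_limit {0..onorm P} (\<lambda>n t. poly (p n) t) u sequentially"
    using polynomial_uniform_approx[OF u] by blast
  obtain q where q: "uniform_limit {0..onorm P} (\<lambda>n t. poly (q n) t) v sequentially"
    using polynomial_uniform_approx[OF v] by blast
  define r where "r n = p n - smult c (q n) - [:a:]" for n
  have r: "uniform_limit {0..onorm P} (\<lambda>n t. poly (r n) t) (\<lambda>t. u t - c * v t - a) sequentially"
    unfolding r_def by (simp, intro uniform_limit_intros p q)
  have lim: "(\<lambda>n. Re (cinner (poly_op (r n) P x) x))
      \<longlonglongrightarrow> Re (cinner (fcalc u P x) x) - c * Re (cinner (fcalc v P x) x) - a * (norm x)\<^sup>2"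
    unfolding r_def
    by (simp add: poly_op_diff poly_op_smult poly_op_const cinner_diff_left cinner_scaleR_left cinner_self)
       (intro tendsto_intros tendsto_cinner_left fcalc_tendsto[OF P u p] fcalc_tendsto[OF P v q])
  have "0 \<le> Re (cinner (fcalc u P x) x) - c * Re (cinner (fcalc v P x) x) - a * (norm x)\<^sup>2"
    by (rule poly_op_limit_nonneg[OF P r _ lim]) (use h in \<open>simp add: algebra_simps\<close>)
  then show ?thesis by simp
qed

lemma posop_fcalc:
  assumes P: "posop P" and f: "continuous_on {0..onorm P} f"
    and nn: "\<And>t. t \<in> {0..onorm P} \<Longrightarrow> 0 \<le> f t"
  shows "posop (fcalc f P)"
proof -
  have "0 \<le> Re (cinner (fcalc f P x) x)" for x
    using fcalc_ineq[OF P f f, of 0 0 x] nn by simp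
  then show ?thesis
    unfolding posop_def using bounded_linear_fcalc[OF P f] sadj_fcalc[OF P f] by blast
qed

lemma cinner_fcalc_square:
  assumes P: "posop P" and u: "continuous_on {0..onorm P} u"
  shows "cinner (fcalc (\<lambda>t. u t * u t) P x) y = cinner (fcalc u P x) (fcalc u P y)"
proof -
  obtain p where p: "uniform_limit {0..onorm P} (\<lambda>n t. poly (p n) t) u sequentially"
    using polynomial_uniform_approx[OF u] by blast
  have "bounded (u ` {0..onorm P})"
    by (intro compact_imp_bounded compact_continuous_image u compact_Icc)
  then have "uniform_limit {0..onorm P} (\<lambda>n t. poly (p n * p n) t) (\<lambda>t. u t * u t) sequentially"
    using uniform_lim_mult[OF p p] by simp
  moreover have "continuous_on {0..onorm P} (\<lambda>t. u t * u t)"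
    using u by (intro continuous_intros)
  ultimately have "(\<lambda>n. cinner (poly_op (p n * p n) P x) y) \<longlonglongrightarrow> cinner (fcalc (\<lambda>t. u t * u t) P x) y"
    by (intro tendsto_cinner_left fcalc_tendsto[OF P])
  moreover have "(\<lambda>n. cinner (poly_op (p n * p n) P x) y) \<longlonglongrightarrow> cinner (fcalc u P x) (fcalc u P y)"
    unfolding cinner_poly_op_square[OF P]
    by (rule bounded_bilinear.tendsto[OF bounded_bilinear_cinner fcalc_tendsto[OF P u p] fcalc_tendsto[OF P u p]])
  ultimately show ?thesis by (rule LIMSEQ_unique)
qed

lemma cinner_fcalc_id_square:
  assumes P: "posop P"
  shows "Re (cinner (fcalc (\<lambda>t. t * t) P x) x) = (norm (P x))\<^sup>2"
  using cinner_fcalc_square[OF P continuous_on_id, of x x]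
  by (simp add: fcalc_id[OF P] power2_norm_eq_cinner)

lemma fcalc_sqrt_square:
  assumes P: "posop P"
  shows "fcalc sqrt P (fcalc sqrt P x) = P x"
proof (rule cinner_eqI)
  fix y
  have s: "continuous_on {0..onorm P} sqrt" by (intro continuous_intros)
  have "fcalc (\<lambda>t. sqrt t * sqrt t) P = fcalc (\<lambda>t. t) P" by (rule fcalc_cong) simp
  then have "cinner (P x) y = cinner (fcalc sqrt P x) (fcalc sqrt P y)"
    using cinner_fcalc_square[OF P s] fcalc_id[OF P] by simp
  then show "cinner (fcalc sqrt P (fcalc sqrt P x)) y = cinner (P x) y"
    using sadj_fcalc[OF P s] unfolding sadj_def by simp
qed

lemma posop_abs_op: "bounded_op A \<Longrightarrow> posop (abs_op A)"
  unfolding abs_op_def by (rule posop_fcalc[OF posop_adj_comp(1)]) (auto intro: continuous_intros)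

lemma abs_op_abs_op: "bounded_op A \<Longrightarrow> abs_op A (abs_op A x) = adj A (A x)"
  unfolding abs_op_def using fcalc_sqrt_square[OF posop_adj_comp(1)] by simp

lemma cinner_abs_op:
  assumes A: "bounded_op A"
  shows "cinner (abs_op A x) (abs_op A y) = cinner (A x) (A y)"
proof -
  have "cinner (abs_op A x) (abs_op A y) = cinner (abs_op A (abs_op A x)) y"
    using posopD(3)[OF posop_abs_op[OF A]] unfolding sadj_def by simp
  then show ?thesis by (simp add: abs_op_abs_op[OF A] cinner_adj_left[OF A])
qed

lemma norm_abs_op: "bounded_op A \<Longrightarrow> norm (abs_op A x) = norm (A x)"
  using cinner_abs_op[of A x x] by (simp add: norm_cinner)

lemma abs_op_square: "bounded_op A \<Longrightarrow> abs_op A ^^ 2 = adj A \<circ> A"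
  by (simp add: fun_eq_iff numeral_2_eq_2 abs_op_abs_op)


section \<open>Operator Jensen and McCarthy inequalities\<close>

text \<open>Monotonicity matters only at \<open>s = 0\<close>, where a convex function on \<open>[0, \<infinity>)\<close> may
have slope \<open>-\<infinity>\<close>.\<close>

lemma mono_convex_on_support_line:
  fixes f :: "real \<Rightarrow> real"
  assumes mono: "mono_on {0..} f" and cvx: "convex_on {0..} f" and s: "0 \<le> s"
  obtains c where "\<And>t. 0 \<le> t \<Longrightarrow> f s + c * (t - s) \<le> f t"
proof (cases "s = 0")
  case True
  then show ?thesis using mono that[of 0] by (auto simp: mono_on_def)
next
  case False
  have slope: "(f s - f t) / (s - t) \<le> (f u - f s) / (u - s)" if "0 \<le> t" "t < s" "s < u" for t u
  proof -
    have "(f t - f s) / (t - s) \<le> (f t - f u) / (t - u)"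
         "(f t - f u) / (t - u) \<le> (f s - f u) / (s - u)"
      using convex_on_slope_le[OF cvx, of t u s] that by auto
    then show ?thesis by (metis minus_diff_eq minus_divide_divide order_trans)
  qed
  define L where "L = {(f s - f t) / (s - t) | t. 0 \<le> t \<and> t < s}"
  have "L \<noteq> {}" unfolding L_def using s False by auto
  have "bdd_above L"
    unfolding L_def using slope[of _ "s + 1"] by (intro bdd_aboveI) auto
  have "f s + Sup L * (t - s) \<le> f t" if t: "0 \<le> t" for t
  proof (cases t s rule: linorder_cases)
    case less
    have "(f s - f t) / (s - t) \<le> Sup L"
      by (rule cSup_upper[OF _ \<open>bdd_above L\<close>]) (use t less in \<open>auto simp: L_def\<close>)
    then show ?thesis using less by (simp add: pos_divide_le_eq algebra_simps)
  next
    case greater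
    have "Sup L \<le> (f t - f s) / (t - s)"
      by (rule cSup_least[OF \<open>L \<noteq> {}\<close>]) (use slope greater in \<open>auto simp: L_def\<close>)
    then show ?thesis using greater by (simp add: pos_le_divide_eq algebra_simps)
  qed simp
  then show ?thesis by (rule that)
qed

lemma mono_convex_on_continuous_on:
  fixes f :: "real \<Rightarrow> real"
  assumes mono: "mono_on {0..} f" and cvx: "convex_on {0..} f"
  shows "continuous_on {0..} f"
  unfolding continuous_on_eq_continuous_within
proof
  fix x :: real assume x: "x \<in> {0..}"
  show "continuous (at x within {0..}) f"
  proof (cases "x = 0")
    case False
    have "convex_on {0<..} f" by (rule convex_on_subset[OF cvx]) auto
    then have "continuous_on {0<..} f" by (intro convex_on_continuous) auto
    then have "isCont f x" using False x by (simp add: continuous_on_eq_continuous_at)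
    then show ?thesis by (rule continuous_at_imp_continuous_at_within)
  next
    case True
    have "(f \<longlongrightarrow> f 0) (at 0 within {0..})"
    proof (rule tendsto_sandwich[of "\<lambda>t. f 0" f _ "\<lambda>t. (1 - t) * f 0 + t * f 1"])
      show "\<forall>\<^sub>F t in at 0 within {0..}. f 0 \<le> f t"
        unfolding eventually_at_filter using mono by (auto simp: mono_on_def)
      show "\<forall>\<^sub>F t in at 0 within {0..}. f t \<le> (1 - t) * f 0 + t * f 1"
        unfolding eventually_at
        by (rule exI[of _ 1]) (auto simp: dist_real_def intro: convex_onD[OF cvx, of _ 0 1, simplified])
      have "((\<lambda>t. (1 - t) * f 0 + t * f 1) \<longlongrightarrow> (1 - 0) * f 0 + 0 * f 1) (at 0 within {0..})"
        by (intro tendsto_intros)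
      then show "((\<lambda>t. (1 - t) * f 0 + t * f 1) \<longlongrightarrow> f 0) (at 0 within {0..})" by simp
    qed simp
    then show ?thesis using True by (simp add: continuous_within)
  qed
qed

theorem jensen_fcalc:
  fixes \<phi> g :: "real \<Rightarrow> real"
  assumes P: "posop P" and x: "norm x = 1"
    and g: "continuous_on {0..onorm P} g" and g0: "\<And>t. t \<in> {0..onorm P} \<Longrightarrow> 0 \<le> g t"
    and mono: "mono_on {0..} \<phi>" and cvx: "convex_on {0..} \<phi>"
  shows "\<phi> (Re (cinner (fcalc g P x) x)) \<le> Re (cinner (fcalc (\<phi> \<circ> g) P x) x)"
proof -
  define s where "s = Re (cinner (fcalc g P x) x)"
  have "0 \<le> s" unfolding s_def by (rule posopD(4)[OF posop_fcalc[OF P g g0]])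
  then obtain c where c: "\<And>w. 0 \<le> w \<Longrightarrow> \<phi> s + c * (w - s) \<le> \<phi> w"
    using mono_convex_on_support_line[OF mono cvx] by blast
  have "continuous_on {0..onorm P} (\<phi> \<circ> g)"
    using g0 by (intro continuous_on_compose[OF g] continuous_on_subset[OF mono_convex_on_continuous_on[OF mono cvx]])
      auto
  then have "(\<phi> s - c * s) * (norm x)\<^sup>2 + c * Re (cinner (fcalc g P x) x)
      \<le> Re (cinner (fcalc (\<phi> \<circ> g) P x) x)"
    by (rule fcalc_ineq[OF P _ g]) (use c[OF g0] in \<open>simp add: algebra_simps\<close>)
  then show ?thesis using x by (simp add: s_def)
qed

corollary jensen_op:
  assumes P: "posop P" and x: "norm x = 1"
    and mono: "mono_on {0..} \<phi>" and cvx: "convex_on {0..} \<phi>"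
  shows "\<phi> (Re (cinner (P x) x)) \<le> Re (cinner (fcalc \<phi> P x) x)"
  using jensen_fcalc[OF P x continuous_on_id _ mono cvx] by (simp add: fcalc_id[OF P] o_def)

lemma convex_on_powr_nonneg:
  fixes p :: real
  assumes p: "p \<ge> 1"
  shows "convex_on {0..} (\<lambda>x. x powr p)"
proof (rule convex_on_linorderI)
  fix t x y :: real
  assume t: "0 < t" "t < 1" and xy: "x \<in> {0..}" "y \<in> {0..}" "x < y"
  show "((1 - t) *\<^sub>R x + t *\<^sub>R y) powr p \<le> (1 - t) * x powr p + t * y powr p"
  proof (cases "x = 0")
    case False
    then show ?thesis using xy t convex_onD[OF powr_convex[OF p], of t x y] by simp
  next
    case True
    have "(t * y) powr p = t powr p * y powr p" using t xy by (simp add: powr_mult)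
    also have "\<dots> \<le> t powr 1 * y powr p"
      using t p by (intro mult_right_mono powr_mono') auto
    finally show ?thesis using True t p by simp
  qed
qed (simp add: convex_real_interval)

lemma mono_on_powr: "0 \<le> p \<Longrightarrow> mono_on {0..} (\<lambda>x::real. x powr p)"
  unfolding mono_on_def by (auto intro: powr_mono2)

text \<open>McCarthy's inequality is Jensen's inequality for \<open>\<phi> t = t\<^bsup>1/\<beta>\<^esup>\<close> and \<open>g t = t\<^sup>2\<close>.\<close>

theorem mccarthy_inequality:
  assumes S: "posop S" and x: "norm x = 1" and \<beta>: "0 < \<beta>" "\<beta> \<le> 1"
  shows "(norm (S x))\<^sup>2 \<le> (Re (cinner (fcalc (\<lambda>t. t powr (2 / \<beta>)) S x) x)) powr \<beta>"
proof -
  define \<phi> where "\<phi> w = w powr (1 / \<beta>)" for w :: real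
  have "\<phi> (Re (cinner (fcalc (\<lambda>t. t * t) S x) x)) \<le> Re (cinner (fcalc (\<phi> \<circ> (\<lambda>t. t * t)) S x) x)"
    unfolding \<phi>_def using \<beta>
    by (intro jensen_fcalc[OF S x] continuous_intros mono_on_powr convex_on_powr_nonneg) auto
  moreover have "fcalc (\<phi> \<circ> (\<lambda>t. t * t)) S = fcalc (\<lambda>t. t powr (2 / \<beta>)) S"
  proof (rule fcalc_cong)
    fix t :: real assume "t \<in> {0..onorm S}"
    then show "(\<phi> \<circ> (\<lambda>t. t * t)) t = t powr (2 / \<beta>)"
      unfolding \<phi>_def by (cases "t = 0") (auto simp: powr_mult powr_add[symmetric])
  qed
  ultimately have "((norm (S x))\<^sup>2) powr (1 / \<beta>) \<le> Re (cinner (fcalc (\<lambda>t. t powr (2 / \<beta>)) S x) x)"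
    by (simp add: cinner_fcalc_id_square[OF S] \<phi>_def)
  then have "(((norm (S x))\<^sup>2) powr (1 / \<beta>)) powr \<beta>
      \<le> (Re (cinner (fcalc (\<lambda>t. t powr (2 / \<beta>)) S x) x)) powr \<beta>"
    using \<beta> by (intro powr_mono2) auto
  then show ?thesis using \<beta> by (simp add: powr_powr)
qed

section \<open>Buzano's inequality and the two bounds\<close>

lemma buzano_inequality:
  assumes e: "norm e = 1"
  shows "2 * cmod (cinner a e * cinner e b) \<le> norm a * norm b + cmod (cinner a b)"
proof -
  define c where "c = cinner a e"
  define w where "w = scaleC (2 * c) e - a"
  have ee: "cinner e e = 1" using e by (simp add: cinner_self)
  have ea: "cinner e a = cnj c" unfolding c_def by (rule cinner_commute)
  have "cinner w w = cinner a a"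
    unfolding w_def
    by (simp add: cinner_diff_left cinner_diff_right cinner_scaleC_left cinner_scaleC_right ee ea
        c_def[symmetric] algebra_simps)
  then have nw: "norm w = norm a" by (simp add: norm_cinner)
  have "2 * (c * cinner e b) = cinner w b + cinner a b"
    unfolding w_def by (simp add: cinner_diff_left cinner_scaleC_left)
  then have "cmod (2 * (c * cinner e b)) \<le> cmod (cinner w b) + cmod (cinner a b)"
    by (metis norm_triangle_ineq)
  also have "\<dots> \<le> norm a * norm b + cmod (cinner a b)"
    using cmod_cinner_le[of w b] nw by simp
  finally show ?thesis unfolding c_def by (simp add: norm_mult)
qed

lemma buzano_adj:
  assumes B: "bounded_op B" and x: "norm x = 1"
  shows "2 * cmod (cinner a x * cinner (B x) x) \<le> norm a * norm (adj B x) + cmod (cinner (B a) x)"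
  using buzano_inequality[OF x, of a "adj B x"] by (simp add: cinner_adj_right[OF B])

lemma mono_convex_bound_half:
  fixes f :: "real \<Rightarrow> real"
  assumes mono: "mono_on {0..} f" and cvx: "convex_on {0..} f"
    and nonneg: "0 \<le> L" "0 \<le> a" "0 \<le> b" "0 \<le> k" and buz: "2 * L \<le> a * b + k"
  shows "f L \<le> 1/2 * f k + 1/4 * (f (a\<^sup>2) + f (b\<^sup>2))"
proof -
  have Fc: "f ((1/2) * u + (1 - 1/2) * v) \<le> (1/2) * f u + (1 - 1/2) * f v" if "0 \<le> u" "0 \<le> v" for u v
    using convex_onD[OF cvx, of "1/2" v u] that by (simp add: algebra_simps)
  have "2 * (a * b) \<le> a\<^sup>2 + b\<^sup>2" using sum_squares_bound[of a b] by (simp add: algebra_simps)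
  then have "L \<le> 1/2 * ((1/2) * a\<^sup>2 + (1 - 1/2) * b\<^sup>2) + (1 - 1/2) * k" using buz by argo
  then have "f L \<le> f (1/2 * ((1/2) * a\<^sup>2 + (1 - 1/2) * b\<^sup>2) + (1 - 1/2) * k)"
    using mono nonneg by (intro mono_onD[OF mono]) auto
  also have "\<dots> \<le> 1/2 * f ((1/2) * a\<^sup>2 + (1 - 1/2) * b\<^sup>2) + (1 - 1/2) * f k"
    using nonneg by (intro Fc) auto
  finally have "f L \<le> 1/2 * f ((1/2) * a\<^sup>2 + (1 - 1/2) * b\<^sup>2) + (1 - 1/2) * f k" .
  moreover have "f ((1/2) * a\<^sup>2 + (1 - 1/2) * b\<^sup>2) \<le> (1/2) * f (a\<^sup>2) + (1 - 1/2) * f (b\<^sup>2)"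
    by (intro Fc) auto
  ultimately show ?thesis by argo
qed

lemma mono_convex_bound_young:
  fixes f :: "real \<Rightarrow> real"
  assumes mono: "mono_on {0..} f" and cvx: "convex_on {0..} f"
    and nonneg: "0 \<le> L" "0 \<le> k" "0 \<le> p" "0 \<le> q" and buz: "2 * L \<le> a * b + k"
    and \<alpha>: "0 < \<alpha>" "\<alpha> < 1" and a: "a\<^sup>2 \<le> p powr \<alpha>" and b: "b\<^sup>2 \<le> q powr (1 - \<alpha>)"
  shows "f (L\<^sup>2) \<le> (f (k\<^sup>2) + (\<alpha> * f p + (1 - \<alpha>) * f q)) / 2"
proof -
  have Fc: "f (\<mu> * u + (1 - \<mu>) * v) \<le> \<mu> * f u + (1 - \<mu>) * f v"
    if "0 \<le> u" "0 \<le> v" "0 \<le> \<mu>" "\<mu> \<le> 1" for u v \<mu>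
    using convex_onD[OF cvx, of "1 - \<mu>" u v] that by simp
  define V where "V = \<alpha> * p + (1 - \<alpha>) * q"
  have "0 \<le> V" unfolding V_def using nonneg \<alpha> by simp
  have "(a * b)\<^sup>2 \<le> p powr \<alpha> * q powr (1 - \<alpha>)"
    using a b by (simp add: power_mult_distrib mult_mono)
  also have "\<dots> \<le> V"
    using nonneg \<alpha> Youngs_inequality_0[of \<alpha> "1 - \<alpha>" p q] unfolding V_def
    by (cases "p = 0 \<or> q = 0") auto
  finally have "(a * b)\<^sup>2 \<le> V" .
  have "L\<^sup>2 \<le> ((a * b + k) / 2)\<^sup>2"
    using buz nonneg by (intro power_mono) auto
  also have "\<dots> \<le> ((a * b)\<^sup>2 + k\<^sup>2) / 2"
    using sum_squares_bound[of "a * b" k] by (simp add: power2_eq_square algebra_simps)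
  also have "\<dots> \<le> 1/2 * V + (1 - 1/2) * k\<^sup>2" using \<open>(a * b)\<^sup>2 \<le> V\<close> by simp
  finally have "f (L\<^sup>2) \<le> f (1/2 * V + (1 - 1/2) * k\<^sup>2)"
    using \<open>0 \<le> V\<close> by (intro mono_onD[OF mono]) auto
  also have "\<dots> \<le> 1/2 * f V + (1 - 1/2) * f (k\<^sup>2)" using \<open>0 \<le> V\<close> by (intro Fc) auto
  finally have "f (L\<^sup>2) \<le> 1/2 * f V + (1 - 1/2) * f (k\<^sup>2)" .
  moreover have "f V \<le> \<alpha> * f p + (1 - \<alpha>) * f q" unfolding V_def using nonneg \<alpha> by (intro Fc) auto
  ultimately show ?thesis by argo
qed

lemma abs_op_powr_bound:
  fixes f :: "real \<Rightarrow> real"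
  assumes A: "bounded_op A" and B: "bounded_op B" and x: "norm x = 1"
    and mono: "mono_on {0..} f" and cvx: "convex_on {0..} f" and \<alpha>: "0 < \<alpha>" "\<alpha> < 1"
  shows "f ((cmod (cinner (A x) x * cinner (B x) x))\<^sup>2)
           \<le> (f ((cmod (cinner (B (A x)) x))\<^sup>2)
               + Re (cinner ((\<lambda>y. \<alpha> *\<^sub>R fcalc f (fcalc (\<lambda>t. t powr (2 / \<alpha>)) (abs_op A)) y
                                + (1 - \<alpha>) *\<^sub>R fcalc f (fcalc (\<lambda>t. t powr (2 / (1 - \<alpha>))) (abs_op (adj B))) y) x) x)) / 2"
proof -
  have B': "bounded_op (adj B)" by (rule bounded_op_adj[OF B])
  define QA where "QA = fcalc (\<lambda>t. t powr (2 / \<alpha>)) (abs_op A)"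
  define QB where "QB = fcalc (\<lambda>t. t powr (2 / (1 - \<alpha>))) (abs_op (adj B))"
  have cont: "continuous_on {0..r} (\<lambda>t::real. t powr e)" if "0 < e" for r e
    using that by (intro continuous_on_powr' continuous_intros) auto
  have QA: "posop QA" and QB: "posop QB"
    unfolding QA_def QB_def using \<alpha> by (auto intro!: posop_fcalc posop_abs_op A B' cont)
  have "f ((cmod (cinner (A x) x * cinner (B x) x))\<^sup>2)
      \<le> (f ((cmod (cinner (B (A x)) x))\<^sup>2)
          + (\<alpha> * f (Re (cinner (QA x) x)) + (1 - \<alpha>) * f (Re (cinner (QB x) x)))) / 2"
  proof (rule mono_convex_bound_young[OF mono cvx _ _ posopD(4)[OF QA] posopD(4)[OF QB] buzano_adj[OF B x] \<alpha>])
    show "(norm (A x))\<^sup>2 \<le> Re (cinner (QA x) x) powr \<alpha>"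
      using mccarthy_inequality[OF posop_abs_op[OF A] x, of \<alpha>] \<alpha>
      by (simp add: QA_def norm_abs_op[OF A])
    show "(norm (adj B x))\<^sup>2 \<le> Re (cinner (QB x) x) powr (1 - \<alpha>)"
      using mccarthy_inequality[OF posop_abs_op[OF B'] x, of "1 - \<alpha>"] \<alpha>
      by (simp add: QB_def norm_abs_op[OF B'])
  qed auto
  also have "\<dots> \<le> (f ((cmod (cinner (B (A x)) x))\<^sup>2)
      + (\<alpha> * Re (cinner (fcalc f QA x) x) + (1 - \<alpha>) * Re (cinner (fcalc f QB x) x))) / 2"
    using jensen_op[OF QA x mono cvx] jensen_op[OF QB x mono cvx] \<alpha>
    by (intro divide_right_mono add_mono mult_left_mono) auto
  finally show ?thesis by (simp add: QA_def QB_def cinner_add_left cinner_scaleR_left)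
qed

lemma abs_op_square_bound:
  fixes f :: "real \<Rightarrow> real"
  assumes A: "bounded_op A" and B: "bounded_op B" and x: "norm x = 1"
    and mono: "mono_on {0..} f" and cvx: "convex_on {0..} f"
  shows "f (cmod (cinner (A x) x * cinner (B x) x))
           \<le> 1/2 * f (cmod (cinner (B (A x)) x))
             + 1/4 * Re (cinner ((\<lambda>y. fcalc f (abs_op A ^^ 2) y + fcalc f (abs_op (adj B) ^^ 2) y) x) x)"
proof -
  have B': "bounded_op (adj B)" by (rule bounded_op_adj[OF B])
  have "f ((norm (T x))\<^sup>2) \<le> Re (cinner (fcalc f (abs_op T ^^ 2) x) x)" if "bounded_op T" for T
    using jensen_op[OF posop_adj_comp(1)[OF that] x mono cvx] posop_adj_comp(2)[OF that, of x x]
    by (simp add: abs_op_square[OF that] power2_norm_eq_cinner)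
  note jensen = this
  have "f (cmod (cinner (A x) x * cinner (B x) x))
      \<le> 1/2 * f (cmod (cinner (B (A x)) x)) + 1/4 * (f ((norm (A x))\<^sup>2) + f ((norm (adj B x))\<^sup>2))"
    by (rule mono_convex_bound_half[OF mono cvx _ _ _ _ buzano_adj[OF B x]]) auto
  also have "\<dots> \<le> 1/2 * f (cmod (cinner (B (A x)) x))
      + 1/4 * (Re (cinner (fcalc f (abs_op A ^^ 2) x) x) + Re (cinner (fcalc f (abs_op (adj B) ^^ 2) x) x))"
    using jensen[OF A] jensen[OF B'] by simp
  finally show ?thesis by (simp add: cinner_add_left)
qed

theorem theorem3p1:
  fixes A B :: "'a::chilbert \<Rightarrow> 'a" and x :: 'a and f :: "real \<Rightarrow> real"
  assumes "bounded_op A" and "bounded_op B"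
    and "norm x = 1"
    and "mono_on {0..} f" and "convex_on {0..} f"
  shows "(\<forall>\<alpha>::real. 0 < \<alpha> \<and> \<alpha> < 1 \<longrightarrow>
           f ((cmod (cinner (A x) x * cinner (B x) x))\<^sup>2)
           \<le> (f ((cmod (cinner (B (A x)) x))\<^sup>2)
               + Re (cinner ((\<lambda>y. \<alpha> *\<^sub>R fcalc f (fcalc (\<lambda>t. t powr (2 / \<alpha>)) (abs_op A)) y
                                + (1 - \<alpha>) *\<^sub>R fcalc f (fcalc (\<lambda>t. t powr (2 / (1 - \<alpha>))) (abs_op (adj B))) y) x) x)) / 2)
       \<and> f (cmod (cinner (A x) x * cinner (B x) x))
           \<le> 1/2 * f (cmod (cinner (B (A x)) x))
             + 1/4 * Re (cinner ((\<lambda>y. fcalc f (abs_op A ^^ 2) y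
                                     + fcalc f (abs_op (adj B) ^^ 2) y) x) x)"
  using abs_op_powr_bound[OF assms] abs_op_square_bound[OF assms] by blast

end
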